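(* Let $n \geq 0$ and $k \geq 1$ be integers. Let $\mathcal{H}$ be a separable infinite-dimensional complex Hilbert space with orthonormal basis $\{e_m\}_{m\geq 1}$. For $j\ge 0$ let $P_j$ be the orthogonal projection onto $\mathrm{span}\{e_1,\dots,e_j\}$ (with $P_0=0$), and let $S_k$ be the unilateral shift of multiplicity $k$, $S_k e_m = e_{m+k}$ for $m\geq 1$. Fix scalars $x^i_j\in\mathbb{C}$ for $1\le i\le n$, $1\le j\le n+k$, and define the finite rank operator $F$ by $$F(e_i)=x_1^ie_1+\cdots+x_{i+k-1}^ie_{i+k-1}+(x_{i+k}^i-1)e_{i+k}+x_{i+k+1}^ie_{i+k+1}+\cdots+x_{n+k}^ie_{n+k}\ \ (1\le i\le n),\qquad F(e_i)=0\ \ (i\geq n+1).$$ Set $F_1=F+S_kP_n$ and, for $r\geq 2$, $F_r=F_1^r+\sum_{j=1}^{r-1}S_k^{j}(I-P_n)F_1^{r-j}$. Let $T=S_k+F$, and assume that $T$ is a completely non-unitary contraction with finite-dimensional defect spaces such that $\mathcal{D}_T\subseteq\mathcal{D}_{T^*}$, $\dim\mathcal{D}_T=n$ and $\dim(\mathcal{D}_{T^*}\ominus\mathcal{D}_T)=k$. Then: (1) $\mathrm{rank}(P_n-F_1^*F_1)=n$; (2) $F_1(I-P_n)=(I-P_{n+k})F_1=0$; (3) there exists $\lambda\geq 0$ such that $\lambda\|F_1^*x\|^2-\|F_1x\|^2\leq \lambda \|P_{n+k} x\|^2-\|P_n x\|^2$ for all $x\in \mathcal{H}$; (4) for all $r\geq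 1$ and all $x\in\mathcal{H}$, $\|F_rx\|\leq \|P_n x\|$ and $\|F_r^*x\|\leq \|P_{n+kr}x\|$; moreover, the only $x\in\mathcal{H}$ satisfying $\|F_rx\|=\|P_nx\|$ and $\|F_r^*x\|=\|P_{n+kr}x\|$ for all $r\geq 1$ is $x=0$.
   Context: For a contraction $T$ (i.e. $\|T\|\le 1$) on a Hilbert space $\mathcal{H}$, the defect operators are $D_T=(I-T^*T)^{1/2}$ and $D_{T^*}=(I-TT^* )^{1/2}$, and the defect spaces are $\mathcal{D}_T=\overline{D_T\mathcal{H}}$ and $\mathcal{D}_{T^*}=\overline{D_{T^*}\mathcal{H}}$. A contraction $T$ is completely non-unitary (c.n.u.) if there is no nonzero closed subspace $\mathcal{M}$ reducing $T$ such that $T|_{\mathcal{M}}$ is unitary. *)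

theory Defs
  imports Complex_Main
begin

text \<open>Concrete model of the separable infinite-dimensional complex Hilbert space:
  vectors are coefficient sequences v with respect to the orthonormal basis e_1, e_2, ...;
  v m is the coefficient of e_m (m >= 1), the unused index 0 is forced to be 0.
  Operators are maps on sequences, only their behaviour on l2 matters.\<close>

type_synonym vec = "nat \<Rightarrow> complex"

definition l2 :: "vec set" where
  "l2 = {v. v 0 = 0 \<and> summable (\<lambda>m. (cmod (v m))^2)}"

definition l2_inner :: "vec \<Rightarrow> vec \<Rightarrow> complex" where
  "l2_inner u v = (\<Sum>m. cnj (u m) * v m)"

definition l2_norm :: "vec \<Rightarrow> real" where
  "l2_norm v = sqrt (\<Sum>m. (cmod (v m))^2)"

definition bounded_op :: "(vec \<Rightarrow> vec) \<Rightarrow> bool" where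
  "bounded_op A \<longleftrightarrow> (\<forall>v\<in>l2. A v \<in> l2)
     \<and> (\<forall>u\<in>l2. \<forall>v\<in>l2. \<forall>a b. A (\<lambda>m. a * u m + b * v m) = (\<lambda>m. a * A u m + b * A v m))
     \<and> (\<exists>C. \<forall>v\<in>l2. l2_norm (A v) \<le> C * l2_norm v)"

definition op_adj :: "(vec \<Rightarrow> vec) \<Rightarrow> (vec \<Rightarrow> vec)" where
  "op_adj A = (SOME B. bounded_op B \<and> (\<forall>u\<in>l2. \<forall>v\<in>l2. l2_inner (A u) v = l2_inner u (B v)))"

definition positive_op :: "(vec \<Rightarrow> vec) \<Rightarrow> bool" where
  "positive_op B \<longleftrightarrow> bounded_op B \<and>
     (\<forall>v\<in>l2. l2_inner v (B v) \<in> \<real> \<and> 0 \<le> Re (l2_inner v (B v)))"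

definition op_sqrt :: "(vec \<Rightarrow> vec) \<Rightarrow> (vec \<Rightarrow> vec)" where
  "op_sqrt A = (SOME B. positive_op B \<and> (\<forall>v\<in>l2. B (B v) = A v))"

definition l2_closure :: "vec set \<Rightarrow> vec set" where
  "l2_closure M = {v\<in>l2. \<forall>e>0. \<exists>u\<in>M. l2_norm (\<lambda>m. v m - u m) < e}"

definition closed_subspace :: "vec set \<Rightarrow> bool" where
  "closed_subspace M \<longleftrightarrow> M \<subseteq> l2 \<and> (\<lambda>m. 0) \<in> M
     \<and> (\<forall>u\<in>M. \<forall>v\<in>M. \<forall>a b. (\<lambda>m. a * u m + b * v m) \<in> M)
     \<and> l2_closure M = M"

definition orth_diff :: "vec set \<Rightarrow> vec set \<Rightarrow> vec set" where
  "orth_diff N M = {v\<in>N. \<forall>u\<in>M. l2_inner u v = 0}"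

definition has_dim :: "vec set \<Rightarrow> nat \<Rightarrow> bool" where
  "has_dim M d \<longleftrightarrow> (\<exists>b :: nat \<Rightarrow> vec.
      M = {(\<lambda>m. \<Sum>i<d. c i * b i m) | c. True}
    \<and> (\<forall>c. (\<lambda>m. \<Sum>i<d. c i * b i m) = (\<lambda>m. 0) \<longrightarrow> (\<forall>i<d. c i = 0)))"

definition is_contraction :: "(vec \<Rightarrow> vec) \<Rightarrow> bool" where
  "is_contraction T \<longleftrightarrow> bounded_op T \<and> (\<forall>v\<in>l2. l2_norm (T v) \<le> l2_norm v)"

definition defect_space :: "(vec \<Rightarrow> vec) \<Rightarrow> vec set" where
  "defect_space T = l2_closure (op_sqrt (\<lambda>v m. v m - op_adj T (T v) m) ` l2)"

definition reduces :: "vec set \<Rightarrow> (vec \<Rightarrow> vec) \<Rightarrow> bool" where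
  "reduces M T \<longleftrightarrow> closed_subspace M \<and> T ` M \<subseteq> M \<and> op_adj T ` M \<subseteq> M"

definition cnu :: "(vec \<Rightarrow> vec) \<Rightarrow> bool" where
  "cnu T \<longleftrightarrow> \<not> (\<exists>M. M \<noteq> {\<lambda>m. 0} \<and> reduces M T
      \<and> (\<forall>v\<in>M. l2_norm (T v) = l2_norm v) \<and> T ` M = M)"

definition shift :: "nat \<Rightarrow> vec \<Rightarrow> vec" where
  "shift k v = (\<lambda>m. if k < m then v (m - k) else 0)"

definition proj :: "nat \<Rightarrow> vec \<Rightarrow> vec" where
  "proj j v = (\<lambda>m. if 1 \<le> m \<and> m \<le> j then v m else 0)"

text \<open>The finite rank operator F; x i j stands for x^i_j, the coefficient of e_j in T e_i.\<close>
definition Fop :: "nat \<Rightarrow> nat \<Rightarrow> (nat \<Rightarrow> nat \<Rightarrow> complex) \<Rightarrow> vec \<Rightarrow> vec" where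
  "Fop n k x v = (\<lambda>m. \<Sum>i=1..n. v i *
      (if 1 \<le> m \<and> m \<le> n + k then x i m - (if m = i + k then 1 else 0) else 0))"

definition F1op :: "nat \<Rightarrow> nat \<Rightarrow> (nat \<Rightarrow> nat \<Rightarrow> complex) \<Rightarrow> vec \<Rightarrow> vec" where
  "F1op n k x v = (\<lambda>m. Fop n k x v m + shift k (proj n v) m)"

definition Frop :: "nat \<Rightarrow> nat \<Rightarrow> (nat \<Rightarrow> nat \<Rightarrow> complex) \<Rightarrow> nat \<Rightarrow> vec \<Rightarrow> vec" where
  "Frop n k x r v = (\<lambda>m. (F1op n k x ^^ r) v m
      + (\<Sum>j=1..r-1. (shift k ^^ j)
           (\<lambda>m'. (F1op n k x ^^ (r - j)) v m' - proj n ((F1op n k x ^^ (r - j)) v) m') m))"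

definition Top :: "nat \<Rightarrow> nat \<Rightarrow> (nat \<Rightarrow> nat \<Rightarrow> complex) \<Rightarrow> vec \<Rightarrow> vec" where
  "Top n k x v = (\<lambda>m. shift k v m + Fop n k x v m)"

end

(*
  Write T = S_k (I - P_n) + F_1, where F_1 = F + S_k P_n maps span{e_1..e_n} into
  span{e_1..e_(n+k)} and vanishes on the orthogonal complement. Then I - T* T = P_n - F_1* F_1,
  and since T is a contraction, so is F_1 on span{e_1..e_n}.

  The binomial series of sqrt (1 - t), evaluated at the finite matrix F_1* F_1, is a positive
  square root of I - T* T with range in span{e_1..e_n}. As dim D_T = n, the closure of its range
  is all of span{e_1..e_n}. If ||F_1 z|| = ||z|| for such a z, then <z, (I - T* T) z> = 0, so
  the square root kills z and z is orthogonal to its range, i.e. z = 0. Hence F_1 is a strict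
  contraction on span{e_1..e_n}, so P_n - F_1* F_1 is invertible there; this gives (1) and,
  quantitatively, ||F_1 z||^2 <= (1 - mu) ||z||^2 for some mu > 0, which transferred to F_1*
  gives (3).

  For (4), F_r = T^r P_n, so ||F_r x|| <= ||P_n x||. Moreover T^r = T^(r-1) F_1 on
  span{e_1..e_n}, so F_r is again a strict contraction from span{e_1..e_n} into
  span{e_1..e_(n+kr)}. Passing to the adjoint gives ||F_r* x|| <= ||P_(n+kr) x||, with equality
  only if the first n + kr coordinates of x vanish; equality for all r therefore forces x = 0.
*)
theory Submission
  imports Defs "HOL-Analysis.L2_Norm" "HOL-Computational_Algebra.Formal_Power_Series"
    "Jordan_Normal_Form.Determinant"
begin


section \<open>Square-summable sequences\<close>

definition basis_vec :: "nat \<Rightarrow> Defs.vec" where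
  "basis_vec j = (\<lambda>m. if m = j then 1 else 0)"

definition supported_on :: "nat \<Rightarrow> Defs.vec \<Rightarrow> bool" where
  "supported_on N v \<longleftrightarrow> (\<forall>m. (m = 0 \<or> N < m) \<longrightarrow> v m = 0)"

definition norm_upto :: "nat \<Rightarrow> Defs.vec \<Rightarrow> real" where
  "norm_upto N v = L2_set (\<lambda>m. cmod (v m)) {1..N}"

definition inner_upto :: "nat \<Rightarrow> Defs.vec \<Rightarrow> Defs.vec \<Rightarrow> complex" where
  "inner_upto N u v = (\<Sum>m=1..N. cnj (u m) * v m)"

lemma supported_onD: "supported_on N v \<Longrightarrow> m \<notin> {1..N} \<Longrightarrow> v m = 0"
  unfolding supported_on_def by (cases "m = 0") auto

lemma supported_on_proj: "supported_on N (proj N v)"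
  unfolding supported_on_def proj_def by auto

lemma supported_basis_vec: "1 \<le> j \<Longrightarrow> j \<le> N \<Longrightarrow> supported_on N (basis_vec j)"
  unfolding supported_on_def basis_vec_def by auto

lemma proj_supported: "supported_on N v \<Longrightarrow> proj N v = v"
  using supported_onD[of N v] by (auto simp: proj_def)

lemma sum_basis_vec: "m \<in> {1..N} \<Longrightarrow> (\<Sum>l=1..N. c l * basis_vec l m) = c m"
  unfolding basis_vec_def by (simp add: if_distrib[of "\<lambda>x. _ * x"] cong: if_cong)

lemma supported_expand:
  assumes "supported_on N w"
  shows "w = (\<lambda>m. \<Sum>l=1..N. w l * basis_vec l m)"
proof
  fix m
  show "w m = (\<Sum>l=1..N. w l * basis_vec l m)"
  proof (cases "m \<in> {1..N}")
    case True
    then show ?thesis by (rule sum_basis_vec[symmetric])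
  next
    case False
    have "(\<Sum>l=1..N. w l * basis_vec l m) = 0"
      using False unfolding basis_vec_def by (auto intro!: sum.neutral)
    then show ?thesis using supported_onD[OF assms False] by simp
  qed
qed

lemma l2_summable: "v \<in> l2 \<Longrightarrow> summable (\<lambda>m. (cmod (v m))^2)"
  unfolding l2_def by auto

lemma l2_at_0: "v \<in> l2 \<Longrightarrow> v 0 = 0"
  unfolding l2_def by auto

lemma supported_in_l2:
  assumes "supported_on N v"
  shows "v \<in> l2"
proof -
  have "summable (\<lambda>m. (cmod (v m))^2)"
    by (rule summable_finite[of "{1..N}"])
      (simp, metis supported_onD[OF assms] norm_zero zero_power2)
  then show ?thesis using assms unfolding l2_def supported_on_def by auto
qed

lemma basis_vec_in_l2: "1 \<le> j \<Longrightarrow> basis_vec j \<in> l2"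
  using supported_in_l2 supported_basis_vec by blast

lemma l2_norm_supported: "supported_on N v \<Longrightarrow> l2_norm v = norm_upto N v"
  unfolding l2_norm_def norm_upto_def L2_set_def
  by (subst suminf_finite[of "{1..N}"]) (auto dest: supported_onD)

lemma l2_norm_proj: "l2_norm (proj N v) = norm_upto N v"
  unfolding l2_norm_supported[OF supported_on_proj] norm_upto_def
  by (rule L2_set_cong) (auto simp: proj_def)

lemma l2_inner_supported_right: "supported_on N v \<Longrightarrow> l2_inner u v = inner_upto N u v"
  unfolding l2_inner_def inner_upto_def
  by (subst suminf_finite[of "{1..N}"]) (auto dest: supported_onD)

lemma l2_inner_supported_left: "supported_on N u \<Longrightarrow> l2_inner u v = inner_upto N u v"
  unfolding l2_inner_def inner_upto_def
  by (subst suminf_finite[of "{1..N}"]) (auto dest: supported_onD)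

lemma l2_inner_basis_vec: "1 \<le> j \<Longrightarrow> l2_inner (basis_vec j) u = u j"
  unfolding l2_inner_supported_left[OF supported_basis_vec[OF _ order_refl]] inner_upto_def
  by (simp add: basis_vec_def if_distrib[of cnj] if_distrib[of "\<lambda>x. x * _"] cong: if_cong)

lemma l2_inner_summable_norm:
  assumes "u \<in> l2" "v \<in> l2"
  shows "summable (\<lambda>m. norm (cnj (u m) * v m))"
proof (rule summable_comparison_test')
  show "summable (\<lambda>m. ((cmod (u m))^2 + (cmod (v m))^2) / 2)"
    using l2_summable[OF assms(1)] l2_summable[OF assms(2)]
    by (intro summable_divide summable_add)
  fix m :: nat
  have "cmod (u m) * cmod (v m) \<le> ((cmod (u m))^2 + (cmod (v m))^2) / 2"
    using sum_squares_bound[of "cmod (u m)" "cmod (v m)"] by (simp add: power2_eq_square)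
  then show "norm (norm (cnj (u m) * v m)) \<le> ((cmod (u m))^2 + (cmod (v m))^2) / 2"
    by (simp add: norm_mult)
qed

lemma l2_inner_summable: "u \<in> l2 \<Longrightarrow> v \<in> l2 \<Longrightarrow> summable (\<lambda>m. cnj (u m) * v m)"
  by (rule summable_norm_cancel[OF l2_inner_summable_norm])

lemma l2_lincomb:
  assumes "u \<in> l2" "v \<in> l2"
  shows "(\<lambda>m. a * u m + b * v m) \<in> l2"
proof -
  have "summable (\<lambda>m. (cmod (a * u m + b * v m))^2)"
  proof (rule summable_comparison_test')
    show "summable (\<lambda>m. 2 * (cmod a)^2 * (cmod (u m))^2 + 2 * (cmod b)^2 * (cmod (v m))^2)"
      using l2_summable[OF assms(1)] l2_summable[OF assms(2)]
      by (intro summable_add summable_mult)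
    fix m :: nat
    have "cmod (a * u m + b * v m) \<le> cmod a * cmod (u m) + cmod b * cmod (v m)"
      by (metis norm_mult norm_triangle_ineq)
    then have "(cmod (a * u m + b * v m))^2 \<le> (cmod a * cmod (u m) + cmod b * cmod (v m))^2"
      by (simp add: power_mono)
    also have "\<dots> \<le> 2 * (cmod a)^2 * (cmod (u m))^2 + 2 * (cmod b)^2 * (cmod (v m))^2"
      using sum_squares_bound[of "cmod a * cmod (u m)" "cmod b * cmod (v m)"]
      by (simp add: power2_eq_square algebra_simps)
    finally show "norm ((cmod (a * u m + b * v m))^2)
        \<le> 2 * (cmod a)^2 * (cmod (u m))^2 + 2 * (cmod b)^2 * (cmod (v m))^2"
      by simp
  qed
  then show ?thesis using assms unfolding l2_def by auto
qed

lemma l2_diff: "u \<in> l2 \<Longrightarrow> v \<in> l2 \<Longrightarrow> (\<lambda>m. u m - v m) \<in> l2"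
  using l2_lincomb[of u v 1 "-1"] by simp

lemma l2_inner_lincomb_right:
  assumes "u \<in> l2" "v \<in> l2" "w \<in> l2"
  shows "l2_inner u (\<lambda>m. a * v m + b * w m) = a * l2_inner u v + b * l2_inner u w"
proof -
  have s: "summable (\<lambda>m. cnj (u m) * v m)" "summable (\<lambda>m. cnj (u m) * w m)"
    using l2_inner_summable assms by auto
  have "l2_inner u (\<lambda>m. a * v m + b * w m)
      = (\<Sum>m. a * (cnj (u m) * v m) + b * (cnj (u m) * w m))"
    unfolding l2_inner_def by (simp add: algebra_simps)
  also have "\<dots> = (\<Sum>m. a * (cnj (u m) * v m)) + (\<Sum>m. b * (cnj (u m) * w m))"
    by (rule suminf_add[symmetric]) (use s in \<open>auto intro: summable_mult\<close>)
  also have "\<dots> = a * l2_inner u v + b * l2_inner u w"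
    unfolding l2_inner_def using s by (simp add: suminf_mult)
  finally show ?thesis .
qed

lemma l2_inner_commute:
  assumes "u \<in> l2" "v \<in> l2"
  shows "l2_inner u v = cnj (l2_inner v u)"
proof -
  have "(\<lambda>m. cnj (v m) * u m) sums l2_inner v u"
    unfolding l2_inner_def using l2_inner_summable[OF assms(2,1)] by (rule summable_sums)
  then have "(\<lambda>m. cnj (cnj (v m) * u m)) sums cnj (l2_inner v u)"
    by (rule iffD2[OF sums_cnj])
  then show ?thesis unfolding l2_inner_def by (simp add: sums_unique[symmetric] mult.commute)
qed

lemma l2_inner_lincomb_left:
  assumes "u \<in> l2" "v \<in> l2" "w \<in> l2"
  shows "l2_inner (\<lambda>m. a * v m + b * w m) u = cnj a * l2_inner v u + cnj b * l2_inner w u"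
  using l2_inner_commute[OF l2_lincomb[OF assms(2,3)] assms(1)]
    l2_inner_lincomb_right[OF assms] l2_inner_commute[OF assms(1,2)]
    l2_inner_commute[OF assms(1,3)]
  by simp

lemma l2_inner_self: "v \<in> l2 \<Longrightarrow> l2_inner v v = of_real ((l2_norm v)^2)"
proof -
  assume v: "v \<in> l2"
  have eq: "\<And>m. cnj (v m) * v m = complex_of_real ((cmod (v m))^2)"
    by (metis complex_norm_square mult.commute of_real_power)
  have "l2_inner v v = (\<Sum>m. complex_of_real ((cmod (v m))^2))"
    unfolding l2_inner_def eq by simp
  also have "\<dots> = of_real (\<Sum>m. (cmod (v m))^2)"
    by (rule suminf_of_real[OF l2_summable[OF v], symmetric])
  also have "(\<Sum>m. (cmod (v m))^2) = (l2_norm v)^2"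
    unfolding l2_norm_def using suminf_nonneg[OF l2_summable[OF v]] by simp
  finally show ?thesis .
qed

lemma l2_norm_nonneg: "v \<in> l2 \<Longrightarrow> 0 \<le> l2_norm v"
  unfolding l2_norm_def using suminf_nonneg[OF l2_summable] by simp

lemma norm_upto_le_l2_norm: "v \<in> l2 \<Longrightarrow> norm_upto N v \<le> l2_norm v"
  unfolding l2_norm_def norm_upto_def L2_set_def
  by (intro real_sqrt_le_mono sum_le_suminf l2_summable) auto

lemma coord_le_l2_norm: "v \<in> l2 \<Longrightarrow> cmod (v m) \<le> l2_norm v"
  unfolding l2_norm_def
  by (rule real_le_rsqrt, rule order_trans[OF _ sum_le_suminf[of _ "{m}"]])
    (auto intro: l2_summable)

lemma l2_norm_eq_0D: "v \<in> l2 \<Longrightarrow> l2_norm v = 0 \<Longrightarrow> v = (\<lambda>m. 0)"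
  using coord_le_l2_norm by (metis norm_le_zero_iff ext)

lemma norm_upto_nonneg: "0 \<le> norm_upto N v"
  unfolding norm_upto_def by simp

lemma norm_upto_sq: "(norm_upto N v)^2 = (\<Sum>m=1..N. (cmod (v m))^2)"
  unfolding norm_upto_def L2_set_def by (simp add: sum_nonneg)

lemma norm_upto_mono: "N \<le> M \<Longrightarrow> norm_upto N v \<le> norm_upto M v"
  unfolding norm_upto_def L2_set_def by (intro real_sqrt_le_mono sum_mono2) auto

lemma coord_le_norm_upto: "1 \<le> m \<Longrightarrow> m \<le> N \<Longrightarrow> cmod (v m) \<le> norm_upto N v"
  unfolding norm_upto_def by (rule member_le_L2_set) auto

lemma norm_upto_eq_0D: "norm_upto N v = 0 \<Longrightarrow> 1 \<le> m \<Longrightarrow> m \<le> N \<Longrightarrow> v m = 0"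
  using coord_le_norm_upto[of m N v] by simp

lemma supported_norm_upto_eq_0D:
  assumes "supported_on N v" "norm_upto N v = 0"
  shows "v = (\<lambda>m. 0)"
proof
  fix m
  show "v m = 0"
    using supported_onD[OF assms(1), of m] norm_upto_eq_0D[OF assms(2), of m] by fastforce
qed

lemma norm_upto_basis_vec_le: "norm_upto N (basis_vec l) \<le> 1"
proof -
  have "(norm_upto N (basis_vec l))^2 = (\<Sum>m\<in>{1..N}. if m = l then 1 else 0)"
    unfolding norm_upto_sq basis_vec_def by (rule sum.cong) auto
  also have "\<dots> \<le> 1^2"
    by simp
  finally show ?thesis
    by (rule power2_le_imp_le) simp
qed

lemma inner_upto_self: "inner_upto N v v = of_real ((norm_upto N v)^2)"
proof -
  have "\<And>m. cnj (v m) * v m = complex_of_real ((cmod (v m))^2)"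
    by (metis complex_norm_square mult.commute of_real_power)
  then show ?thesis unfolding inner_upto_def norm_upto_sq by simp
qed

lemma inner_upto_Cauchy_Schwarz: "cmod (inner_upto N u v) \<le> norm_upto N u * norm_upto N v"
proof -
  have "cmod (inner_upto N u v) \<le> (\<Sum>m=1..N. cmod (cnj (u m) * v m))"
    unfolding inner_upto_def by (rule norm_sum)
  also have "\<dots> = (\<Sum>m=1..N. \<bar>cmod (u m)\<bar> * \<bar>cmod (v m)\<bar>)"
    by (simp add: norm_mult)
  also have "\<dots> \<le> norm_upto N u * norm_upto N v"
    unfolding norm_upto_def by (rule L2_set_mult_ineq)
  finally show ?thesis .
qed

lemma inner_upto_commute: "inner_upto N u v = cnj (inner_upto N v u)"
  unfolding inner_upto_def by (simp add: mult.commute)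

lemma inner_upto_cong:
  "(\<And>m. 1 \<le> m \<Longrightarrow> m \<le> N \<Longrightarrow> v m = w m) \<Longrightarrow> inner_upto N u v = inner_upto N u w"
  unfolding inner_upto_def by (rule sum.cong) auto

lemma inner_upto_diff: "inner_upto N z (\<lambda>m. v m - w m) = inner_upto N z v - inner_upto N z w"
  unfolding inner_upto_def by (simp add: right_diff_distrib sum_subtractf)

lemma l2_closure_supported_orthogonal:
  assumes W: "\<And>u. u \<in> W \<Longrightarrow> supported_on N u \<and> inner_upto N z u = 0"
    and w: "w \<in> l2_closure W"
  shows "supported_on N w \<and> inner_upto N z w = 0"
proof -
  have wl: "w \<in> l2" and approx: "\<forall>e>0. \<exists>u\<in>W. l2_norm (\<lambda>m. w m - u m) < e"
    using w unfolding l2_closure_def by auto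
  define K where "K = norm_upto N z + 1"
  have K: "0 < K" "norm_upto N z \<le> K" "1 \<le> K"
    unfolding K_def using norm_upto_nonneg[of N z] by auto
  have small: "cmod (w m) \<le> e \<and> cmod (inner_upto N z w) \<le> e" if m: "N < m" and e: "0 < e" for m e
  proof -
    obtain u where u: "u \<in> W" "l2_norm (\<lambda>m. w m - u m) < e / K"
      using approx e K(1) by (meson divide_pos_pos)
    have uW: "supported_on N u" "inner_upto N z u = 0" using W[OF u(1)] by auto
    have d: "(\<lambda>m. w m - u m) \<in> l2" by (rule l2_diff[OF wl supported_in_l2[OF uW(1)]])
    have eK: "e / K \<le> e" using K e by (simp add: divide_le_eq)
    have "cmod (w m) = cmod (w m - u m)" using supported_onD[OF uW(1), of m] m by simp
    also have "\<dots> \<le> l2_norm (\<lambda>m. w m - u m)" by (rule coord_le_l2_norm[OF d])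
    finally have "cmod (w m) \<le> e" using u(2) eK by linarith
    have "norm_upto N (\<lambda>m. w m - u m) \<le> e / K"
      using norm_upto_le_l2_norm[OF d, of N] u(2) by linarith
    then have "norm_upto N z * norm_upto N (\<lambda>m. w m - u m) \<le> K * (e / K)"
      by (rule mult_mono[OF K(2)]) (use K(1) norm_upto_nonneg in auto)
    moreover have "cmod (inner_upto N z w) = cmod (inner_upto N z (\<lambda>m. w m - u m))"
      using inner_upto_diff[of N z w u] uW(2) by simp
    ultimately have "cmod (inner_upto N z w) \<le> K * (e / K)"
      using inner_upto_Cauchy_Schwarz[of N z "\<lambda>m. w m - u m"] by linarith
    then show ?thesis using K(1) \<open>cmod (w m) \<le> e\<close> by simp
  qed
  have "cmod (w m) \<le> 0" if m: "N < m" for m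
  proof (rule field_le_epsilon)
    fix e :: real
    assume "0 < e"
    then show "cmod (w m) \<le> 0 + e" using small[OF m] by simp
  qed
  then have "supported_on N w" using l2_at_0[OF wl] unfolding supported_on_def by auto
  moreover have "cmod (inner_upto N z w) \<le> 0"
  proof (rule field_le_epsilon)
    fix e :: real
    assume "0 < e"
    then show "cmod (inner_upto N z w) \<le> 0 + e" using small[of "Suc N"] by simp
  qed
  ultimately show ?thesis by simp
qed



section \<open>Operators given by finitely many columns\<close>

definition mat_op :: "nat \<Rightarrow> (nat \<Rightarrow> nat \<Rightarrow> complex) \<Rightarrow> Defs.vec \<Rightarrow> Defs.vec" where
  "mat_op p a v = (\<lambda>m. \<Sum>i=1..p. v i * a i m)"

definition mat_adj :: "nat \<Rightarrow> nat \<Rightarrow> (nat \<Rightarrow> nat \<Rightarrow> complex) \<Rightarrow> Defs.vec \<Rightarrow> Defs.vec" where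
  "mat_adj p q a u = (\<lambda>i. if 1 \<le> i \<and> i \<le> p then \<Sum>m=1..q. cnj (a i m) * u m else 0)"

definition cols_supported :: "nat \<Rightarrow> (nat \<Rightarrow> nat \<Rightarrow> complex) \<Rightarrow> bool" where
  "cols_supported q a \<longleftrightarrow> (\<forall>i. supported_on q (a i))"

lemma mat_op_supported: "cols_supported q a \<Longrightarrow> supported_on q (mat_op p a v)"
  unfolding cols_supported_def supported_on_def mat_op_def by auto

lemma mat_adj_supported: "supported_on p (mat_adj p q a u)"
  unfolding supported_on_def mat_adj_def by auto

lemma mat_op_cong: "(\<And>i. 1 \<le> i \<Longrightarrow> i \<le> p \<Longrightarrow> v i = w i) \<Longrightarrow> mat_op p a v = mat_op p a w"
  unfolding mat_op_def by (intro ext sum.cong) auto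

lemma mat_op_linear:
  "mat_op p a (\<lambda>m. \<alpha> * u m + \<beta> * w m) = (\<lambda>m. \<alpha> * mat_op p a u m + \<beta> * mat_op p a w m)"
  unfolding mat_op_def by (auto simp: sum_distrib_left sum.distrib algebra_simps intro!: ext)

lemma mat_adj_linear:
  "mat_adj p q a (\<lambda>m. \<alpha> * u m + \<beta> * w m) = (\<lambda>m. \<alpha> * mat_adj p q a u m + \<beta> * mat_adj p q a w m)"
  unfolding mat_adj_def by (auto simp: sum_distrib_left sum.distrib algebra_simps intro!: ext)

lemma mat_op_lincomb:
  "mat_op p a (\<lambda>m. \<Sum>j\<in>J. c j * w j m) = (\<lambda>m. \<Sum>j\<in>J. c j * mat_op p a (w j) m)"
proof
  fix m
  have "mat_op p a (\<lambda>m. \<Sum>j\<in>J. c j * w j m) m = (\<Sum>i=1..p. \<Sum>j\<in>J. c j * (w j i * a i m))"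
    unfolding mat_op_def by (simp add: sum_distrib_right mult.assoc)
  also have "\<dots> = (\<Sum>j\<in>J. \<Sum>i=1..p. c j * (w j i * a i m))"
    by (rule sum.swap)
  also have "\<dots> = (\<Sum>j\<in>J. c j * mat_op p a (w j) m)"
    unfolding mat_op_def by (simp add: sum_distrib_left)
  finally show "mat_op p a (\<lambda>m. \<Sum>j\<in>J. c j * w j m) m = (\<Sum>j\<in>J. c j * mat_op p a (w j) m)" .
qed

lemma mat_op_basis_vec: "1 \<le> l \<Longrightarrow> l \<le> p \<Longrightarrow> mat_op p a (basis_vec l) = a l"
  unfolding mat_op_def basis_vec_def
  by (simp add: if_distrib[of "\<lambda>x. x * _"] cong: if_cong)

lemma l2_norm_le_sum_coord_bound:
  assumes "supported_on q w" "\<And>m. cmod (w m) \<le> K m * c"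
  shows "l2_norm w \<le> (\<Sum>m=1..q. K m) * c"
proof -
  have "l2_norm w \<le> (\<Sum>m=1..q. cmod (w m))"
    unfolding l2_norm_supported[OF assms(1)] norm_upto_def by (rule L2_set_le_sum) auto
  also have "\<dots> \<le> (\<Sum>m=1..q. K m * c)"
    by (rule sum_mono) (use assms in auto)
  finally show ?thesis by (simp add: sum_distrib_right)
qed

lemma norm_mat_op_coord_le:
  assumes "v \<in> l2"
  shows "cmod (mat_op p a v m) \<le> (\<Sum>i=1..p. cmod (a i m)) * l2_norm v"
proof -
  have "cmod (mat_op p a v m) \<le> (\<Sum>i=1..p. cmod (v i * a i m))"
    unfolding mat_op_def by (rule norm_sum)
  also have "\<dots> \<le> (\<Sum>i=1..p. l2_norm v * cmod (a i m))"
    by (rule sum_mono) (simp add: norm_mult mult_right_mono coord_le_l2_norm[OF assms])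
  finally show ?thesis by (simp add: sum_distrib_left mult.commute)
qed

lemma norm_mat_adj_coord_le:
  assumes "v \<in> l2"
  shows "cmod (mat_adj p q a v i) \<le> (\<Sum>m=1..q. cmod (a i m)) * l2_norm v"
proof (cases "1 \<le> i \<and> i \<le> p")
  case True
  have "cmod (mat_adj p q a v i) \<le> (\<Sum>m=1..q. cmod (cnj (a i m) * v m))"
    unfolding mat_adj_def using True by (simp add: norm_sum)
  also have "\<dots> \<le> (\<Sum>m=1..q. l2_norm v * cmod (a i m))"
    by (rule sum_mono) (simp add: norm_mult mult_right_mono coord_le_l2_norm[OF assms] mult.commute)
  finally show ?thesis by (simp add: sum_distrib_left mult.commute)
next
  case False
  then have "mat_adj p q a v i = 0" unfolding mat_adj_def by auto
  then show ?thesis using l2_norm_nonneg[OF assms] by (simp add: sum_nonneg)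
qed

lemma bounded_mat_op: "cols_supported q a \<Longrightarrow> bounded_op (mat_op p a)"
  unfolding bounded_op_def
  using supported_in_l2[OF mat_op_supported] mat_op_linear
    l2_norm_le_sum_coord_bound[OF mat_op_supported norm_mat_op_coord_le]
  by blast

lemma bounded_mat_adj: "bounded_op (mat_adj p q a)"
  unfolding bounded_op_def
  using supported_in_l2[OF mat_adj_supported] mat_adj_linear
    l2_norm_le_sum_coord_bound[OF mat_adj_supported norm_mat_adj_coord_le]
  by blast

lemma inner_upto_mat_op_adj:
  assumes "cols_supported q a"
  shows "inner_upto q (mat_op p a u) v = inner_upto p u (mat_adj p q a v)"
proof -
  have "inner_upto q (mat_op p a u) v = (\<Sum>m=1..q. \<Sum>i=1..p. cnj (u i) * (cnj (a i m) * v m))"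
    unfolding inner_upto_def mat_op_def by (simp add: sum_distrib_left sum_distrib_right mult_ac)
  also have "\<dots> = (\<Sum>i=1..p. \<Sum>m=1..q. cnj (u i) * (cnj (a i m) * v m))"
    by (rule sum.swap)
  also have "\<dots> = inner_upto p u (mat_adj p q a v)"
    unfolding inner_upto_def mat_adj_def by (simp add: sum_distrib_left)
  finally show ?thesis .
qed

lemma l2_inner_mat_op_adj:
  "cols_supported q a \<Longrightarrow> l2_inner (mat_op p a u) v = l2_inner u (mat_adj p q a v)"
  using inner_upto_mat_op_adj l2_inner_supported_left[OF mat_op_supported]
    l2_inner_supported_right[OF mat_adj_supported]
  by metis

lemma bounded_adjoint_unique:
  assumes "bounded_op B" "bounded_op B'"
    and "\<forall>u\<in>l2. \<forall>v\<in>l2. l2_inner (A u) v = l2_inner u (B v)"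
    and "\<forall>u\<in>l2. \<forall>v\<in>l2. l2_inner (A u) v = l2_inner u (B' v)"
    and v: "v \<in> l2"
  shows "B v = B' v"
proof
  fix m
  have Bv: "B v \<in> l2" "B' v \<in> l2" using assms v unfolding bounded_op_def by auto
  show "B v m = B' v m"
  proof (cases "m = 0")
    case True
    then show ?thesis using Bv l2_at_0 by metis
  next
    case False
    then have m: "1 \<le> m" by simp
    have "B v m = l2_inner (basis_vec m) (B v)" using l2_inner_basis_vec[OF m] by simp
    also have "\<dots> = l2_inner (A (basis_vec m)) v" using assms(3) basis_vec_in_l2[OF m] v by simp
    also have "\<dots> = l2_inner (basis_vec m) (B' v)" using assms(4) basis_vec_in_l2[OF m] v by simp
    also have "\<dots> = B' v m" using l2_inner_basis_vec[OF m] by simp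
    finally show ?thesis .
  qed
qed

lemma op_adj_eqI:
  assumes "bounded_op B" "\<forall>u\<in>l2. \<forall>v\<in>l2. l2_inner (A u) v = l2_inner u (B v)" "v \<in> l2"
  shows "op_adj A v = B v"
proof -
  let ?P = "\<lambda>B. bounded_op B \<and> (\<forall>u\<in>l2. \<forall>v\<in>l2. l2_inner (A u) v = l2_inner u (B v))"
  have "?P (op_adj A)" unfolding op_adj_def by (rule someI[of ?P B]) (use assms in auto)
  then show ?thesis using bounded_adjoint_unique[of "op_adj A" B A] assms by blast
qed

lemma op_adj_mat_op: "cols_supported q a \<Longrightarrow> v \<in> l2 \<Longrightarrow> op_adj (mat_op p a) v = mat_adj p q a v"
  using op_adj_eqI[OF bounded_mat_adj] l2_inner_mat_op_adj by blast

text \<open>Bounds on A transfer to A* through ||A* y||^2 = <A A* y, y> <= ||A A* y|| ||y||.\<close>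

lemma norm_mat_adj_sq_le:
  assumes a: "cols_supported q a"
  shows "(norm_upto p (mat_adj p q a y))^2
    \<le> norm_upto q (mat_op p a (mat_adj p q a y)) * norm_upto q y"
proof -
  let ?w = "mat_adj p q a y"
  have "(norm_upto p ?w)^2 = cmod (inner_upto p ?w ?w)"
    unfolding inner_upto_self by (simp add: norm_power)
  also have "inner_upto p ?w ?w = inner_upto q (mat_op p a ?w) y"
    using inner_upto_mat_op_adj[OF a] by metis
  also have "cmod \<dots> \<le> norm_upto q (mat_op p a ?w) * norm_upto q y"
    by (rule inner_upto_Cauchy_Schwarz)
  finally show ?thesis .
qed

lemma mat_adj_norm_sq_le:
  assumes a: "cols_supported q a" and c0: "0 \<le> c"
    and c: "\<And>z. supported_on p z \<Longrightarrow> (norm_upto q (mat_op p a z))^2 \<le> c * (norm_upto p z)^2"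
  shows "(norm_upto p (mat_adj p q a y))^2 \<le> c * (norm_upto q y)^2"
proof -
  let ?W = "norm_upto p (mat_adj p q a y)" and ?Y = "norm_upto q y"
    and ?V = "norm_upto q (mat_op p a (mat_adj p q a y))"
  have "(?W^2)^2 \<le> (?V * ?Y)^2"
    by (rule power_mono[OF norm_mat_adj_sq_le[OF a]]) simp
  also have "\<dots> = ?V^2 * ?Y^2"
    by (simp add: power_mult_distrib)
  also have "\<dots> \<le> (c * ?W^2) * ?Y^2"
    by (rule mult_right_mono[OF c[OF mat_adj_supported]]) simp
  finally have h: "?W^2 * ?W^2 \<le> ?W^2 * (c * ?Y^2)"
    by (simp add: power2_eq_square mult_ac)
  show ?thesis
  proof (cases "?W = 0")
    case True
    then show ?thesis using c0 by simp
  next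
    case False
    then have pos: "?W^2 > 0" by simp
    show ?thesis using h mult_le_cancel_left_pos[OF pos] by blast
  qed
qed

lemma mat_adj_norm_le:
  assumes a: "cols_supported q a"
    and c: "\<And>z. supported_on p z \<Longrightarrow> norm_upto q (mat_op p a z) \<le> norm_upto p z"
  shows "norm_upto p (mat_adj p q a y) \<le> norm_upto q y"
proof -
  let ?w = "mat_adj p q a y"
  have "(norm_upto p ?w)^2 \<le> norm_upto q (mat_op p a ?w) * norm_upto q y"
    by (rule norm_mat_adj_sq_le[OF a])
  also have "\<dots> \<le> norm_upto p ?w * norm_upto q y"
    by (rule mult_right_mono[OF c[OF mat_adj_supported] norm_upto_nonneg])
  finally have "norm_upto p ?w * norm_upto p ?w \<le> norm_upto p ?w * norm_upto q y"
    by (simp add: power2_eq_square)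
  then show ?thesis
    using norm_upto_nonneg[of p ?w] norm_upto_nonneg[of q y]
    by (cases "norm_upto p ?w = 0") (auto simp: mult_le_cancel_left_pos)
qed

lemma mat_adj_norm_eq_imp_zero:
  assumes a: "cols_supported q a"
    and strict:
      "\<And>z. supported_on p z \<Longrightarrow> z \<noteq> (\<lambda>m. 0) \<Longrightarrow> norm_upto q (mat_op p a z) < norm_upto p z"
    and eq: "norm_upto p (mat_adj p q a y) = norm_upto q y" and m: "1 \<le> m" "m \<le> q"
  shows "y m = 0"
proof (cases "mat_adj p q a y = (\<lambda>m. 0)")
  case True
  then have "norm_upto q y = 0" using eq by (simp add: norm_upto_def L2_set_def)
  then show ?thesis using norm_upto_eq_0D m by blast
next
  case False
  let ?w = "mat_adj p q a y"
  have pos: "0 < norm_upto p ?w"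
  proof (rule ccontr)
    assume "\<not> 0 < norm_upto p ?w"
    then have "norm_upto p ?w = 0" using norm_upto_nonneg[of p ?w] by simp
    then have "?w = (\<lambda>m. 0)" by (rule supported_norm_upto_eq_0D[OF mat_adj_supported])
    then show False using False by simp
  qed
  have "(norm_upto p ?w)^2 \<le> norm_upto q (mat_op p a ?w) * norm_upto q y"
    by (rule norm_mat_adj_sq_le[OF a])
  also have "\<dots> < norm_upto p ?w * norm_upto q y"
    using strict[OF mat_adj_supported False] eq pos by (intro mult_strict_right_mono) auto
  finally show ?thesis using eq by (simp add: power2_eq_square)
qed



section \<open>Positive operators and finite-dimensional linear algebra\<close>

lemma bounded_op_l2: "bounded_op S \<Longrightarrow> v \<in> l2 \<Longrightarrow> S v \<in> l2"
  unfolding bounded_op_def by blast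

lemma bounded_op_linear:
  "bounded_op S \<Longrightarrow> u \<in> l2 \<Longrightarrow> v \<in> l2
    \<Longrightarrow> S (\<lambda>m. a * u m + b * v m) = (\<lambda>m. a * S u m + b * S v m)"
  unfolding bounded_op_def by blast

lemma quadratic_form_expand:
  assumes S: "bounded_op S" and u: "u \<in> l2" and v: "v \<in> l2"
  shows "l2_inner (\<lambda>m. 1 * u m + c * v m) (S (\<lambda>m. 1 * u m + c * v m))
     = l2_inner u (S u) + c * l2_inner u (S v) + cnj c * l2_inner v (S u)
       + cnj c * c * l2_inner v (S v)"
proof -
  have Su: "S u \<in> l2" and Sv: "S v \<in> l2" using bounded_op_l2[OF S] u v by auto
  have w: "(\<lambda>m. 1 * S u m + c * S v m) \<in> l2" by (rule l2_lincomb[OF Su Sv])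
  have "l2_inner (\<lambda>m. 1 * u m + c * v m) (S (\<lambda>m. 1 * u m + c * v m))
      = l2_inner (\<lambda>m. 1 * u m + c * v m) (\<lambda>m. 1 * S u m + c * S v m)"
    by (simp only: bounded_op_linear[OF S u v, of 1 c])
  also have "\<dots> = cnj 1 * l2_inner u (\<lambda>m. 1 * S u m + c * S v m)
      + cnj c * l2_inner v (\<lambda>m. 1 * S u m + c * S v m)"
    by (rule l2_inner_lincomb_left[OF w u v])
  also have "l2_inner u (\<lambda>m. 1 * S u m + c * S v m) = 1 * l2_inner u (S u) + c * l2_inner u (S v)"
    by (rule l2_inner_lincomb_right[OF u Su Sv])
  also have "l2_inner v (\<lambda>m. 1 * S u m + c * S v m) = 1 * l2_inner v (S u) + c * l2_inner v (S v)"
    by (rule l2_inner_lincomb_right[OF v Su Sv])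
  finally show ?thesis by (simp add: algebra_simps)
qed

lemma positive_op_self_adjoint:
  assumes P: "positive_op S" and u: "u \<in> l2" and v: "v \<in> l2"
  shows "l2_inner (S u) v = l2_inner u (S v)"
proof -
  have S: "bounded_op S" using P unfolding positive_op_def by simp
  have re: "Im (l2_inner w (S w)) = 0" if "w \<in> l2" for w
    using P that unfolding positive_op_def by (auto simp: complex_is_Real_iff)
  define a where "a = l2_inner u (S v)"
  define b where "b = l2_inner v (S u)"
  have w1: "(\<lambda>m. 1 * u m + 1 * v m) \<in> l2" by (rule l2_lincomb[OF u v])
  have w2: "(\<lambda>m. 1 * u m + \<i> * v m) \<in> l2" by (rule l2_lincomb[OF u v])
  have "Im (l2_inner u (S u) + 1 * a + cnj 1 * b + cnj 1 * 1 * l2_inner v (S v)) = 0"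
    using re[OF w1] quadratic_form_expand[OF S u v, of 1] unfolding a_def b_def by simp
  then have i1: "Im a + Im b = 0" using re[OF u] re[OF v] by simp
  have "Im (l2_inner u (S u) + \<i> * a + cnj \<i> * b + cnj \<i> * \<i> * l2_inner v (S v)) = 0"
    using re[OF w2] quadratic_form_expand[OF S u v, of "\<i>"] unfolding a_def b_def by simp
  then have i2: "Re a - Re b = 0" using re[OF u] re[OF v] by simp
  have ab: "a = cnj b" using i1 i2 by (simp add: complex_eq_iff)
  have "l2_inner (S u) v = cnj (l2_inner v (S u))"
    by (rule l2_inner_commute[OF bounded_op_l2[OF S u] v])
  also have "\<dots> = a" using ab b_def by simp
  finally show ?thesis unfolding a_def .
qed

lemma sum_atLeast1_shift: "(\<Sum>l=1..n. f l) = (\<Sum>l<n. f (Suc l))"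
  by (simp add: sum.atLeast1_atMost_eq)

lemma det_nonzero_if_cols_independent:
  fixes col :: "nat \<Rightarrow> nat \<Rightarrow> complex"
  assumes inj: "\<And>c. (\<And>i. 1 \<le> i \<Longrightarrow> i \<le> n \<Longrightarrow> (\<Sum>l=1..n. c l * col l i) = 0)
    \<Longrightarrow> (\<And>l. 1 \<le> l \<Longrightarrow> l \<le> n \<Longrightarrow> c l = 0)"
  defines "A \<equiv> mat n n (\<lambda>(i, l). col (Suc l) (Suc i))"
  shows "det A \<noteq> 0"
proof
  assume "det A = 0"
  then obtain w where w: "w \<in> carrier_vec n" "w \<noteq> 0\<^sub>v n" "A *\<^sub>v w = 0\<^sub>v n"
    using det_0_iff_vec_prod_zero[of A n] unfolding A_def by auto
  define c where "c l = (if 1 \<le> l \<and> l \<le> n then w $ (l - 1) else 0)" for l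
  have "c l = 0" if l: "1 \<le> l" "l \<le> n" for l
  proof (rule inj[OF _ l])
    fix i assume i: "1 \<le> i" "i \<le> n"
    have "(A *\<^sub>v w) $ (i - 1) = 0" using w(3) i by simp
    then have "(\<Sum>l<n. col (Suc l) i * w $ l) = 0"
      using i w(1) unfolding A_def by (simp add: scalar_prod_def row_def atLeast0LessThan)
    moreover have "(\<Sum>l=1..n. c l * col l i) = (\<Sum>l<n. col (Suc l) i * w $ l)"
      unfolding sum_atLeast1_shift c_def by (intro sum.cong) auto
    ultimately show "(\<Sum>l=1..n. c l * col l i) = 0" by simp
  qed
  then have "w = 0\<^sub>v n"
  proof (intro eq_vecI)
    fix j assume "j < dim_vec (0\<^sub>v n :: complex vec)"
    then have j: "j < n" by simp
    have "c (Suc j) = 0" using \<open>\<And>l. 1 \<le> l \<Longrightarrow> l \<le> n \<Longrightarrow> c l = 0\<close> j by simp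
    then show "w $ j = 0\<^sub>v n $ j" unfolding c_def using j by simp
  qed (use w(1) in simp)
  then show False using w(2) by simp
qed

lemma cols_independent_imp_spanning:
  fixes col :: "nat \<Rightarrow> nat \<Rightarrow> complex"
  assumes inj: "\<And>c. (\<And>i. 1 \<le> i \<Longrightarrow> i \<le> n \<Longrightarrow> (\<Sum>l=1..n. c l * col l i) = 0)
    \<Longrightarrow> (\<And>l. 1 \<le> l \<Longrightarrow> l \<le> n \<Longrightarrow> c l = 0)"
  shows "\<exists>c. \<forall>i. 1 \<le> i \<and> i \<le> n \<longrightarrow> (\<Sum>l=1..n. c l * col l i) = y i"
proof -
  define A where "A = mat n n (\<lambda>(i, l). col (Suc l) (Suc i))"
  have A: "A \<in> carrier_mat n n" unfolding A_def by simp
  have "det A \<noteq> 0" unfolding A_def by (rule det_nonzero_if_cols_independent, rule inj) assumption+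
  then have "A \<in> Units (ring_mat TYPE(complex) n ())" by (rule det_non_zero_imp_unit[OF A])
  then obtain B where B: "B \<in> carrier_mat n n" "A * B = 1\<^sub>m n"
    unfolding Units_def ring_mat_def by auto
  define yv where "yv = vec n (\<lambda>i. y (Suc i))"
  define w where "w = B *\<^sub>v yv"
  have wc: "w \<in> carrier_vec n"
    unfolding w_def using B(1) by (intro mult_mat_vec_carrier) (auto simp: yv_def)
  have Aw: "A *\<^sub>v w = yv"
    unfolding w_def using B A by (simp add: assoc_mult_mat_vec[symmetric] yv_def)
  define c where "c l = (if 1 \<le> l \<and> l \<le> n then w $ (l - 1) else 0)" for l
  show ?thesis
  proof (intro exI allI impI)
    fix i assume i: "1 \<le> i \<and> i \<le> n"
    have ii: "i - 1 < n" "Suc (i - 1) = i" using i by auto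
    have "(A *\<^sub>v w) $ (i - 1) = y i" using Aw ii unfolding yv_def by simp
    then have "(\<Sum>l<n. col (Suc l) i * w $ l) = y i"
      using i wc ii unfolding A_def by (simp add: scalar_prod_def row_def atLeast0LessThan)
    moreover have "(\<Sum>l=1..n. c l * col l i) = (\<Sum>l<n. col (Suc l) i * w $ l)"
      unfolding sum_atLeast1_shift c_def by (intro sum.cong) auto
    ultimately show "(\<Sum>l=1..n. c l * col l i) = y i" by simp
  qed
qed

lemma has_dim_supported_on: "has_dim {v. supported_on n v} n"
  unfolding has_dim_def
proof (intro exI conjI allI impI)
  show "{v. supported_on n v} = {(\<lambda>m. \<Sum>i<n. c i * basis_vec (Suc i) m) | c. True}"
  proof (intro equalityI subsetI)
    fix y
    assume "y \<in> {v. supported_on n v}"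
    then have "y = (\<lambda>m. \<Sum>l=1..n. y l * basis_vec l m)"
      by (intro supported_expand) simp
    also have "\<dots> = (\<lambda>m. \<Sum>i<n. y (Suc i) * basis_vec (Suc i) m)"
      by (simp only: sum_atLeast1_shift)
    finally show "y \<in> {(\<lambda>m. \<Sum>i<n. c i * basis_vec (Suc i) m) | c. True}"
      by (intro CollectI exI[of _ "\<lambda>i. y (Suc i)"]) simp
  next
    fix y
    assume "y \<in> {(\<lambda>m. \<Sum>i<n. c i * basis_vec (Suc i) m) | c. True}"
    then show "y \<in> {v. supported_on n v}"
      by (auto simp: supported_on_def basis_vec_def intro!: sum.neutral)
  qed
next
  fix c :: "nat \<Rightarrow> complex" and i :: nat
  assume h: "(\<lambda>m. \<Sum>i<n. c i * basis_vec (Suc i) m) = (\<lambda>m. 0)" and i: "i < n"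
  have "(\<Sum>j<n. c j * basis_vec (Suc j) (Suc i)) = c i"
    using i by (simp add: basis_vec_def if_distrib[of "\<lambda>x. _ * x"] cong: if_cong)
  then show "c i = 0" using fun_cong[OF h, of "Suc i"] by simp
qed

lemma independent_supported_cols:
  assumes ind: "\<forall>c. (\<lambda>m. \<Sum>i<n. c i * b i m) = (\<lambda>m. 0) \<longrightarrow> (\<forall>i<n. c i = 0)"
    and b: "\<And>j. j < n \<Longrightarrow> supported_on n (b j)"
    and c: "\<And>i. 1 \<le> i \<Longrightarrow> i \<le> n \<Longrightarrow> (\<Sum>l=1..n. c l * b (l - 1) i) = 0"
    and l: "1 \<le> l" "l \<le> n"
  shows "c l = 0"
proof -
  have "(\<Sum>i<n. c (Suc i) * b i m) = 0" for m
  proof (cases "m \<in> {1..n}")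
    case True
    then show ?thesis using c[of m] by (simp add: sum.atLeast1_atMost_eq)
  next
    case False
    then show ?thesis using supported_onD[OF b False] by simp
  qed
  then have "\<forall>i<n. c (Suc i) = 0" using spec[OF ind, of "\<lambda>i. c (Suc i)"] by simp
  moreover have "l - 1 < n" "Suc (l - 1) = l" using l by auto
  ultimately show ?thesis by metis
qed

lemma has_dim_supported_mem:
  assumes M: "has_dim M n" and sub: "\<And>w. w \<in> M \<Longrightarrow> supported_on n w" and z: "supported_on n z"
  shows "z \<in> M"
proof -
  obtain b where M_eq: "M = {(\<lambda>m. \<Sum>i<n. c i * b i m) | c. True}"
    and ind: "\<forall>c. (\<lambda>m. \<Sum>i<n. c i * b i m) = (\<lambda>m. 0) \<longrightarrow> (\<forall>i<n. c i = 0)"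
    using M unfolding has_dim_def by blast
  have b: "supported_on n (b j)" if j: "j < n" for j
  proof (rule sub)
    have "b j = (\<lambda>m. \<Sum>i<n. (if i = j then 1 else 0) * b i m)"
      using j by (simp add: if_distrib[of "\<lambda>x. x * _"] cong: if_cong)
    then show "b j \<in> M"
      unfolding M_eq mem_Collect_eq by (intro exI[of _ "\<lambda>i. if i = j then 1 else 0"]) simp
  qed
  obtain c where c: "\<forall>i. 1 \<le> i \<and> i \<le> n \<longrightarrow> (\<Sum>l=1..n. c l * b (l - 1) i) = z i"
    using cols_independent_imp_spanning[of n "\<lambda>l. b (l - 1)"]
      independent_supported_cols[OF ind b] by blast
  have "z = (\<lambda>m. \<Sum>i<n. c (Suc i) * b i m)"
  proof
    fix m
    show "z m = (\<Sum>i<n. c (Suc i) * b i m)"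
    proof (cases "m \<in> {1..n}")
      case True
      then show ?thesis using c by (simp add: sum.atLeast1_atMost_eq)
    next
      case False
      then show ?thesis using supported_onD[OF z False] supported_onD[OF b False] by simp
    qed
  qed
  then show ?thesis unfolding M_eq by (intro CollectI exI[of _ "\<lambda>i. c (Suc i)"]) simp
qed

lemma positive_op_kernel:
  assumes S: "positive_op S" and u: "u \<in> l2" and uSSu: "l2_inner u (S (S u)) = 0"
  shows "S u = (\<lambda>m. 0)"
proof -
  have Su: "S u \<in> l2" using S u unfolding positive_op_def by (blast intro: bounded_op_l2)
  have "complex_of_real ((l2_norm (S u))^2) = l2_inner u (S (S u))"
    using l2_inner_self[OF Su] positive_op_self_adjoint[OF S u Su] by simp
  then show ?thesis using uSSu l2_norm_eq_0D[OF Su] by simp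
qed

lemma positive_op_kernel_orthogonal_range:
  assumes S: "positive_op S" and u: "u \<in> l2" "S u = (\<lambda>m. 0)" and v: "v \<in> l2"
  shows "l2_inner u (S v) = 0"
  using positive_op_self_adjoint[OF S u(1) v] u(2) by (simp add: l2_inner_def)



section \<open>The binomial series of sqrt (1 - t)\<close>

text \<open>sqrt_coeff j is the j-th Taylor coefficient of sqrt (1 - t), so the Cauchy square of
  the coefficient sequence is that of 1 - t.\<close>

definition sqrt_coeff :: "nat \<Rightarrow> real" where
  "sqrt_coeff j = (-1)^j * ((1/2::real) gchoose j)"

lemma sqrt_coeff_0: "sqrt_coeff 0 = 1"
  unfolding sqrt_coeff_def by simp

lemma sqrt_coeff_Suc: "sqrt_coeff (Suc j) = sqrt_coeff j * (real j - 1/2) / (real j + 1)"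
proof -
  have "(1/2::real) * ((1/2) gchoose j)
      = real j * ((1/2) gchoose j) + real (Suc j) * ((1/2) gchoose (Suc j))"
    by (rule gbinomial_mult_1)
  then have "((1/2::real) gchoose (Suc j)) = (1/2 - real j) * ((1/2) gchoose j) / (real j + 1)"
    by (simp add: field_simps)
  then have "sqrt_coeff (Suc j) = - ((-1)^j * ((1/2 - real j) * ((1/2) gchoose j) / (real j + 1)))"
    unfolding sqrt_coeff_def by simp
  also have "\<dots> = sqrt_coeff j * (real j - 1/2) / (real j + 1)"
    unfolding sqrt_coeff_def by (simp add: field_simps)
  finally show ?thesis .
qed

lemma sqrt_coeff_nonpos: "1 \<le> j \<Longrightarrow> sqrt_coeff j \<le> 0"
proof (induction j)
  case 0 then show ?case by simp
next
  case (Suc j)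
  show ?case
  proof (cases "j = 0")
    case True then show ?thesis using sqrt_coeff_Suc[of 0] sqrt_coeff_0 by simp
  next
    case False
    then have "sqrt_coeff j \<le> 0" using Suc by simp
    moreover have "0 \<le> (real j - 1/2) / (real j + 1)" using False by simp
    ultimately show ?thesis unfolding sqrt_coeff_Suc
      by (metis mult_nonpos_nonneg times_divide_eq_right)
  qed
qed

lemma sum_sqrt_coeff_atMost: "(\<Sum>i\<le>N. sqrt_coeff i) = (1 - 2 * real N) * sqrt_coeff N"
proof (induction N)
  case 0 then show ?case by (simp add: sqrt_coeff_0)
next
  case (Suc N)
  have "(\<Sum>i\<le>Suc N. sqrt_coeff i) = (1 - 2 * real N) * sqrt_coeff N + sqrt_coeff (Suc N)"
    using Suc by simp
  also have "\<dots> = (1 - 2 * real (Suc N)) * sqrt_coeff (Suc N)"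
    unfolding sqrt_coeff_Suc by (simp add: field_simps)
  finally show ?case .
qed

lemma sum_sqrt_coeff_atMost_nonneg: "0 \<le> (\<Sum>i\<le>N. sqrt_coeff i)"
proof (cases "N = 0")
  case True then show ?thesis by (simp add: sqrt_coeff_0)
next
  case False
  then have "sqrt_coeff N \<le> 0" "1 - 2 * real N \<le> 0" using sqrt_coeff_nonpos by auto
  then show ?thesis unfolding sum_sqrt_coeff_atMost by (simp add: mult_nonpos_nonpos)
qed

lemma sum_sqrt_coeff_lessThan_nonneg: "0 \<le> (\<Sum>i<N. sqrt_coeff i)"
proof (cases N)
  case 0 then show ?thesis by simp
next
  case (Suc M)
  then show ?thesis using sum_sqrt_coeff_atMost_nonneg[of M] by (simp add: lessThan_Suc_atMost)
qed

lemma sum_abs_sqrt_coeff_le: "(\<Sum>i<N. \<bar>sqrt_coeff i\<bar>) \<le> 2"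
proof (cases N)
  case 0 then show ?thesis by simp
next
  case (Suc M)
  have "(\<Sum>i<N. \<bar>sqrt_coeff i\<bar>) = (\<Sum>i<N. 2 * (if i = 0 then sqrt_coeff i else 0) - sqrt_coeff i)"
  proof (rule sum.cong)
    fix i assume "i \<in> {..<N}"
    show "\<bar>sqrt_coeff i\<bar> = 2 * (if i = 0 then sqrt_coeff i else 0) - sqrt_coeff i"
      using sqrt_coeff_nonpos[of i] sqrt_coeff_0 by (cases "i = 0") auto
  qed simp
  also have "\<dots> = 2 * sqrt_coeff 0 - (\<Sum>i<N. sqrt_coeff i)"
    using Suc by (simp add: sum_subtractf sum_distrib_left[symmetric] sum.delta)
  also have "\<dots> \<le> 2" using sum_sqrt_coeff_lessThan_nonneg[of N] sqrt_coeff_0 by simp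
  finally show ?thesis .
qed

lemma summable_abs_sqrt_coeff: "summable (\<lambda>j. \<bar>sqrt_coeff j\<bar>)"
  by (rule summableI_nonneg_bounded[where x=2]) (simp_all add: sum_abs_sqrt_coeff_le)

lemma summable_sqrt_coeff: "summable sqrt_coeff"
  using summable_abs_sqrt_coeff summable_rabs_cancel by blast

lemma suminf_sqrt_coeff_nonneg: "0 \<le> suminf sqrt_coeff"
proof -
  have "(\<lambda>N. \<Sum>i<N. sqrt_coeff i) \<longlonglongrightarrow> suminf sqrt_coeff"
    using summable_LIMSEQ[OF summable_sqrt_coeff] .
  then show ?thesis by (rule LIMSEQ_le_const) (use sum_sqrt_coeff_lessThan_nonneg in auto)
qed

lemma sqrt_coeff_Cauchy_square:
  "(\<Sum>a\<le>j. sqrt_coeff a * sqrt_coeff (j - a)) = (if j = 0 then 1 else if j = 1 then -1 else 0)"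
proof -
  have "(\<Sum>a\<le>j. sqrt_coeff a * sqrt_coeff (j - a))
      = (\<Sum>a\<le>j. (-1)^j * (((1/2::real) gchoose a) * ((1/2) gchoose (j - a))))"
  proof (rule sum.cong)
    fix a
    assume "a \<in> {..j}"
    then have "(-1::real)^a * (-1)^(j - a) = (-1)^j" by (simp add: power_add[symmetric])
    then show "sqrt_coeff a * sqrt_coeff (j - a)
        = (-1)^j * (((1/2::real) gchoose a) * ((1/2) gchoose (j - a)))"
      unfolding sqrt_coeff_def by (metis (no_types, lifting) mult.assoc mult.left_commute)
  qed simp
  also have "\<dots> = (-1)^j * (\<Sum>a=0..j. ((1/2::real) gchoose a) * ((1/2) gchoose (j - a)))"
    by (simp add: sum_distrib_left atMost_atLeast0)
  also have "\<dots> = (-1)^j * ((1/2 + 1/2::real) gchoose j)"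
    by (simp only: gbinomial_Vandermonde)
  also have "(1/2 + 1/2::real) = of_nat 1" by simp
  also have "(of_nat 1 gchoose j) = (of_nat (1 choose j) :: real)"
    by (rule binomial_gbinomial[symmetric])
  finally show ?thesis
    by (cases j) (auto simp: binomial_eq_0 split: nat.splits)
qed



section \<open>Contractions between coordinate spaces\<close>

locale column_matrix =
  fixes n q :: nat and a :: "nat \<Rightarrow> nat \<Rightarrow> complex"
  assumes cols: "cols_supported q a"
begin

definition gram :: "Defs.vec \<Rightarrow> Defs.vec" where
  "gram v = mat_adj n q a (mat_op n a v)"

definition defect :: "Defs.vec \<Rightarrow> Defs.vec" where
  "defect v = (\<lambda>i. proj n v i - gram v i)"

abbreviation gram_pow :: "nat \<Rightarrow> Defs.vec \<Rightarrow> Defs.vec" where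
  "gram_pow j \<equiv> gram ^^ j"

definition gram_cols :: "nat \<Rightarrow> nat \<Rightarrow> complex" where
  "gram_cols l i = (if 1 \<le> i \<and> i \<le> n then \<Sum>m=1..q. cnj (a i m) * a l m else 0)"

definition defect_cols :: "nat \<Rightarrow> nat \<Rightarrow> complex" where
  "defect_cols l i = (if 1 \<le> i \<and> i \<le> n then basis_vec l i - gram_cols l i else 0)"

lemma gram_eq_mat_op: "gram = mat_op n gram_cols"
proof (intro ext)
  fix v i
  show "gram v i = mat_op n gram_cols v i"
  proof (cases "1 \<le> i \<and> i \<le> n")
    case True
    have "gram v i = (\<Sum>m=1..q. \<Sum>l=1..n. cnj (a i m) * (v l * a l m))"
      unfolding gram_def mat_adj_def mat_op_def using True by (simp add: sum_distrib_left)
    also have "\<dots> = (\<Sum>l=1..n. \<Sum>m=1..q. cnj (a i m) * (v l * a l m))"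
      by (rule sum.swap)
    also have "\<dots> = mat_op n gram_cols v i"
      unfolding mat_op_def gram_cols_def using True by (simp add: sum_distrib_left mult_ac)
    finally show ?thesis .
  next
    case False
    then show ?thesis unfolding gram_def mat_adj_def mat_op_def gram_cols_def by auto
  qed
qed

lemma gram_supported: "supported_on n (gram v)"
  unfolding gram_def by (rule mat_adj_supported)

lemma defect_supported: "supported_on n (defect v)"
  using gram_supported[of v] unfolding supported_on_def defect_def proj_def by auto

lemma defect_eq_mat_op: "defect = mat_op n defect_cols"
proof (intro ext)
  fix v i
  show "defect v i = mat_op n defect_cols v i"
  proof (cases "i \<in> {1..n}")
    case True
    have "mat_op n defect_cols v i = (\<Sum>l=1..n. v l * basis_vec l i) - mat_op n gram_cols v i"
      unfolding mat_op_def defect_cols_def using True by (simp add: right_diff_distrib sum_subtractf)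
    also have "(\<Sum>l=1..n. v l * basis_vec l i) = v i"
      by (rule sum_basis_vec[OF True])
    finally show ?thesis unfolding defect_def proj_def gram_eq_mat_op using True by simp
  next
    case False
    then have "defect_cols l i = 0" for l unfolding defect_cols_def by auto
    then show ?thesis using supported_onD[OF defect_supported False] by (simp add: mat_op_def)
  qed
qed

lemma inner_upto_gram: "inner_upto n u (gram v) = inner_upto q (mat_op n a u) (mat_op n a v)"
  unfolding gram_def using inner_upto_mat_op_adj[OF cols] by metis

lemma gram_self_adjoint: "inner_upto n (gram u) v = inner_upto n u (gram v)"
  using inner_upto_commute inner_upto_gram by metis

lemma inner_upto_defect:
  "inner_upto n z (defect z) = complex_of_real ((norm_upto n z)^2 - (norm_upto q (mat_op n a z))^2)"
proof -
  have "inner_upto n z (defect z) = inner_upto n z (proj n z) - inner_upto n z (gram z)"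
    unfolding defect_def by (rule inner_upto_diff)
  also have "inner_upto n z (proj n z) = inner_upto n z z"
    by (rule inner_upto_cong) (simp add: proj_def)
  also have "inner_upto n z (gram z) = inner_upto q (mat_op n a z) (mat_op n a z)"
    by (rule inner_upto_gram)
  finally show ?thesis by (simp add: inner_upto_self)
qed

lemma gram_pow_supported: "supported_on n z \<Longrightarrow> supported_on n (gram_pow j z)"
  by (induction j) (auto simp: gram_supported)

lemma gram_pow_self_adjoint: "inner_upto n u (gram_pow j v) = inner_upto n (gram_pow j u) v"
proof (induction j arbitrary: u)
  case 0
  then show ?case by simp
next
  case (Suc j)
  have "inner_upto n u (gram_pow (Suc j) v) = inner_upto n (gram u) (gram_pow j v)"
    using gram_self_adjoint by simp
  also have "\<dots> = inner_upto n (gram_pow j (gram u)) v"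
    using Suc by simp
  also have "gram_pow j (gram u) = gram_pow (Suc j) u"
    by (simp add: funpow_Suc_right del: funpow.simps)
  finally show ?case .
qed

lemma gram_pow_lincomb:
  "gram_pow j (\<lambda>m. \<Sum>p\<in>J. c p * w p m) = (\<lambda>m. \<Sum>p\<in>J. c p * gram_pow j (w p) m)"
  by (induction j) (simp_all add: gram_eq_mat_op mat_op_lincomb)

lemma gram_pow_expand:
  "supported_on n w \<Longrightarrow> gram_pow j w = (\<lambda>i. \<Sum>p=1..n. w p * gram_pow j (basis_vec p) i)"
  using supported_expand[of n w] gram_pow_lincomb[where c=w and w=basis_vec and J="{1..n}"]
  by metis

lemma gram_expand: "gram v = (\<lambda>i. \<Sum>p=1..n. v p * gram (basis_vec p) i)"
proof
  fix i
  have "(\<Sum>p=1..n. v p * mat_op n gram_cols (basis_vec p) i) = (\<Sum>p=1..n. v p * gram_cols p i)"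
    by (rule sum.cong) (simp_all add: mat_op_basis_vec)
  then show "gram v i = (\<Sum>p=1..n. v p * gram (basis_vec p) i)"
    unfolding gram_eq_mat_op by (simp only: mat_op_def[of n gram_cols v])
qed

end

locale matrix_contraction = column_matrix +
  assumes contraction: "\<And>z. supported_on n z \<Longrightarrow> norm_upto q (mat_op n a z) \<le> norm_upto n z"
begin

lemma mat_op_norm_le: "norm_upto q (mat_op n a v) \<le> norm_upto n v"
  using contraction[OF supported_on_proj[of n v]] l2_norm_proj[of n v]
    l2_norm_supported[OF supported_on_proj] mat_op_cong[of n v "proj n v" a]
  by (simp add: proj_def)

lemma gram_norm_le: "norm_upto n (gram v) \<le> norm_upto n v"
  unfolding gram_def
  using mat_adj_norm_le[OF cols contraction] mat_op_norm_le order_trans by metis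

lemma gram_pow_norm_le: "norm_upto n (gram_pow j v) \<le> norm_upto n v"
  by (induction j) (auto intro: order_trans[OF gram_norm_le])

lemma norm_gram_pow_basis_coord_le:
  assumes "1 \<le> i" "i \<le> n"
  shows "cmod (gram_pow j (basis_vec l) i) \<le> 1"
  using coord_le_norm_upto[OF assms, of "gram_pow j (basis_vec l)"]
    gram_pow_norm_le[of j "basis_vec l"] norm_upto_basis_vec_le[of n l]
  by linarith

text \<open>With A = mat_op n a and G = gram = A* A: <z, G^(2s) z> = ||G^s z||^2 and
  <z, G^(2s+1) z> = ||A G^s z||^2.\<close>

lemma gram_pow_quadratic_form_bounds:
  assumes z: "supported_on n z"
  shows "\<exists>r. inner_upto n z (gram_pow j z) = of_real r \<and> 0 \<le> r \<and> r \<le> (norm_upto n z)^2"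
proof -
  define s where "s = j div 2"
  have "j = 2 * s \<or> j = 2 * s + 1" unfolding s_def by presburger
  then show ?thesis
  proof
    assume j: "j = 2 * s"
    have "gram_pow j z = gram_pow s (gram_pow s z)"
      unfolding j by (simp add: funpow_add mult_2)
    then have "inner_upto n z (gram_pow j z) = inner_upto n (gram_pow s z) (gram_pow s z)"
      using gram_pow_self_adjoint by metis
    also have "\<dots> = of_real ((norm_upto n (gram_pow s z))^2)"
      by (rule inner_upto_self)
    moreover have "(norm_upto n (gram_pow s z))^2 \<le> (norm_upto n z)^2"
      by (rule power_mono[OF gram_pow_norm_le norm_upto_nonneg])
    ultimately show ?thesis by (intro exI[of _ "(norm_upto n (gram_pow s z))^2"]) simp
  next
    assume j: "j = 2 * s + 1"
    let ?w = "gram_pow s z"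
    have j': "j = s + Suc s" using j by simp
    have "gram_pow j z = gram_pow s (gram ?w)"
      unfolding j' funpow_add comp_apply funpow.simps(2) by simp
    then have "inner_upto n z (gram_pow j z) = inner_upto n ?w (gram ?w)"
      using gram_pow_self_adjoint by metis
    also have "\<dots> = inner_upto q (mat_op n a ?w) (mat_op n a ?w)"
      by (rule inner_upto_gram)
    also have "\<dots> = of_real ((norm_upto q (mat_op n a ?w))^2)"
      by (rule inner_upto_self)
    finally have e: "inner_upto n z (gram_pow j z) = of_real ((norm_upto q (mat_op n a ?w))^2)" .
    have "norm_upto q (mat_op n a ?w) \<le> norm_upto n z"
      using mat_op_norm_le[of ?w] gram_pow_norm_le[of s z] by linarith
    then have "(norm_upto q (mat_op n a ?w))^2 \<le> (norm_upto n z)^2"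
      by (rule power_mono[OF _ norm_upto_nonneg])
    then show ?thesis using e by (intro exI[of _ "(norm_upto q (mat_op n a ?w))^2"]) simp
  qed
qed

text \<open>The square root of defect = I - G on span{e_1, ..., e_n} is the power series
  (\<Sum>j. sqrt_coeff j * G^j), which converges entrywise because G is a contraction and
  sqrt_coeff is absolutely summable. Its square is the Cauchy product of the series, i.e. I - G.
  It is positive because 0 <= <z, G^j z> <= ||z||^2 and sqrt_coeff j <= 0 for j >= 1, so that
  <z, B z> >= (\<Sum>j. sqrt_coeff j) ||z||^2 >= 0.\<close>

definition sqrt_term :: "nat \<Rightarrow> nat \<Rightarrow> nat \<Rightarrow> complex" where
  "sqrt_term j i l = complex_of_real (sqrt_coeff j) * gram_pow j (basis_vec l) i"

definition sqrt_entry :: "nat \<Rightarrow> nat \<Rightarrow> complex" where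
  "sqrt_entry i l = (\<Sum>j. sqrt_term j i l)"

definition sqrt_cols :: "nat \<Rightarrow> nat \<Rightarrow> complex" where
  "sqrt_cols l i = (if 1 \<le> i \<and> i \<le> n then sqrt_entry i l else 0)"

lemma summable_norm_sqrt_term:
  assumes "1 \<le> i" "i \<le> n"
  shows "summable (\<lambda>j. norm (sqrt_term j i l))"
proof (rule summable_comparison_test'[OF summable_abs_sqrt_coeff])
  fix j :: nat
  assume "j \<ge> 0"
  have "\<bar>sqrt_coeff j\<bar> * cmod (gram_pow j (basis_vec l) i) \<le> \<bar>sqrt_coeff j\<bar>"
    using norm_gram_pow_basis_coord_le[OF assms] by (simp add: mult_left_le)
  then show "norm (norm (sqrt_term j i l)) \<le> \<bar>sqrt_coeff j\<bar>"
    by (simp add: sqrt_term_def norm_mult)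
qed

lemma summable_sqrt_term: "1 \<le> i \<Longrightarrow> i \<le> n \<Longrightarrow> summable (\<lambda>j. sqrt_term j i l)"
  by (rule summable_norm_cancel[OF summable_norm_sqrt_term])

lemma sqrt_term_Cauchy_product:
  assumes l: "1 \<le> l" "l \<le> n"
  shows "(\<Sum>p=1..n. \<Sum>b\<le>j. sqrt_term b i p * sqrt_term (j - b) p l)
    = complex_of_real (\<Sum>b\<le>j. sqrt_coeff b * sqrt_coeff (j - b)) * gram_pow j (basis_vec l) i"
proof -
  have summand: "(\<Sum>p=1..n. sqrt_term b i p * sqrt_term (j - b) p l)
      = complex_of_real (sqrt_coeff b * sqrt_coeff (j - b)) * gram_pow j (basis_vec l) i"
    if b: "b \<le> j" for b
  proof -
    have "(\<Sum>p=1..n. sqrt_term b i p * sqrt_term (j - b) p l)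
        = complex_of_real (sqrt_coeff b * sqrt_coeff (j - b))
          * (\<Sum>p=1..n. gram_pow (j - b) (basis_vec l) p * gram_pow b (basis_vec p) i)"
      unfolding sqrt_term_def by (simp add: sum_distrib_left mult_ac)
    also have "(\<Sum>p=1..n. gram_pow (j - b) (basis_vec l) p * gram_pow b (basis_vec p) i)
        = gram_pow b (gram_pow (j - b) (basis_vec l)) i"
      using gram_pow_expand[OF gram_pow_supported[OF supported_basis_vec[OF l]], of b] by simp
    also have "gram_pow b (gram_pow (j - b) (basis_vec l)) = gram_pow j (basis_vec l)"
      using funpow_add[of b "j - b" gram] b by simp
    finally show ?thesis .
  qed
  have "(\<Sum>p=1..n. \<Sum>b\<le>j. sqrt_term b i p * sqrt_term (j - b) p l)
      = (\<Sum>b\<le>j. \<Sum>p=1..n. sqrt_term b i p * sqrt_term (j - b) p l)"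
    by (rule sum.swap)
  also have "\<dots> = (\<Sum>b\<le>j. complex_of_real (sqrt_coeff b * sqrt_coeff (j - b)) * gram_pow j (basis_vec l) i)"
    by (rule sum.cong[OF refl], rule summand) simp
  finally show ?thesis by (simp add: sum_distrib_right)
qed

lemma sqrt_entry_square:
  assumes i: "1 \<le> i" "i \<le> n" and l: "1 \<le> l" "l \<le> n"
  shows "(\<Sum>p=1..n. sqrt_entry i p * sqrt_entry p l) = basis_vec l i - gram (basis_vec l) i"
proof -
  have Cauchy: "sqrt_entry i p * sqrt_entry p l = (\<Sum>j. \<Sum>b\<le>j. sqrt_term b i p * sqrt_term (j - b) p l)"
    and summable: "summable (\<lambda>j. \<Sum>b\<le>j. sqrt_term b i p * sqrt_term (j - b) p l)"
    if p: "p \<in> {1..n}" for p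
  proof -
    have "summable (\<lambda>j. norm (sqrt_term j i p))" "summable (\<lambda>j. norm (sqrt_term j p l))"
      using summable_norm_sqrt_term i p by auto
    then show "sqrt_entry i p * sqrt_entry p l = (\<Sum>j. \<Sum>b\<le>j. sqrt_term b i p * sqrt_term (j - b) p l)"
      and "summable (\<lambda>j. \<Sum>b\<le>j. sqrt_term b i p * sqrt_term (j - b) p l)"
      unfolding sqrt_entry_def by (rule Cauchy_product, rule summable_Cauchy_product)
  qed
  have "(\<Sum>p=1..n. sqrt_entry i p * sqrt_entry p l)
      = (\<Sum>p=1..n. \<Sum>j. \<Sum>b\<le>j. sqrt_term b i p * sqrt_term (j - b) p l)"
    by (rule sum.cong[OF refl]) (rule Cauchy)
  also have "\<dots> = (\<Sum>j. \<Sum>p=1..n. \<Sum>b\<le>j. sqrt_term b i p * sqrt_term (j - b) p l)"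
    by (rule suminf_sum[symmetric]) (rule summable)
  also have "\<dots> = (\<Sum>j. complex_of_real (\<Sum>b\<le>j. sqrt_coeff b * sqrt_coeff (j - b))
      * gram_pow j (basis_vec l) i)"
    unfolding sqrt_term_Cauchy_product[OF l] ..
  also have "\<dots> = (\<Sum>j\<in>{0,1}. complex_of_real (\<Sum>b\<le>j. sqrt_coeff b * sqrt_coeff (j - b))
      * gram_pow j (basis_vec l) i)"
    by (rule suminf_finite) (auto simp: sqrt_coeff_Cauchy_square)
  also have "\<dots> = basis_vec l i - gram (basis_vec l) i"
    by (simp add: sqrt_coeff_Cauchy_square)
  finally show ?thesis .
qed

lemma cols_supported_sqrt_cols: "cols_supported n sqrt_cols"
  unfolding cols_supported_def supported_on_def sqrt_cols_def by auto

lemma sqrt_op_square: "mat_op n sqrt_cols (mat_op n sqrt_cols v) = defect v"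
proof
  fix i
  show "mat_op n sqrt_cols (mat_op n sqrt_cols v) i = defect v i"
  proof (cases "i \<in> {1..n}")
    case True
    have "mat_op n sqrt_cols (mat_op n sqrt_cols v) i
        = (\<Sum>p=1..n. (\<Sum>l=1..n. v l * sqrt_entry p l) * sqrt_entry i p)"
      unfolding mat_op_def sqrt_cols_def using True by (intro sum.cong) auto
    also have "\<dots> = (\<Sum>p=1..n. \<Sum>l=1..n. v l * (sqrt_entry i p * sqrt_entry p l))"
      by (simp add: sum_distrib_left sum_distrib_right mult_ac)
    also have "\<dots> = (\<Sum>l=1..n. \<Sum>p=1..n. v l * (sqrt_entry i p * sqrt_entry p l))"
      by (rule sum.swap)
    also have "\<dots> = (\<Sum>l=1..n. v l * (basis_vec l i - gram (basis_vec l) i))"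
    proof (rule sum.cong[OF refl])
      fix l
      assume "l \<in> {1..n}"
      then show "(\<Sum>p=1..n. v l * (sqrt_entry i p * sqrt_entry p l))
          = v l * (basis_vec l i - gram (basis_vec l) i)"
        using sqrt_entry_square[of i l] True by (simp add: sum_distrib_left[symmetric])
    qed
    also have "\<dots> = (\<Sum>l=1..n. v l * basis_vec l i) - gram v i"
      by (simp add: right_diff_distrib sum_subtractf fun_cong[OF gram_expand[of v]])
    also have "(\<Sum>l=1..n. v l * basis_vec l i) = v i"
      by (rule sum_basis_vec[OF True])
    finally show ?thesis unfolding defect_def proj_def using True by simp
  next
    case False
    then show ?thesis
      using supported_onD[OF defect_supported False]
        supported_onD[OF mat_op_supported[OF cols_supported_sqrt_cols] False]
      by simp
  qed
qed

lemma inner_upto_sqrt_op: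
  "inner_upto n v (mat_op n sqrt_cols v)
    = (\<Sum>j. complex_of_real (sqrt_coeff j) * inner_upto n (proj n v) (gram_pow j (proj n v)))"
proof -
  let ?z = "proj n v"
  have z: "supported_on n ?z" by (rule supported_on_proj)
  define f where "f j i l = cnj (v i) * v l * sqrt_term j i l" for j i l
  have sf: "summable (\<lambda>j. f j i l)" if "i \<in> {1..n}" for i l
    unfolding f_def using summable_sqrt_term that by (intro summable_mult) auto
  have "inner_upto n v (mat_op n sqrt_cols v) = (\<Sum>i=1..n. \<Sum>l=1..n. cnj (v i) * v l * sqrt_entry i l)"
    unfolding inner_upto_def mat_op_def sqrt_cols_def
    by (intro sum.cong) (auto simp: sum_distrib_left mult_ac)
  also have "\<dots> = (\<Sum>i=1..n. \<Sum>l=1..n. \<Sum>j. f j i l)"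
    unfolding sqrt_entry_def f_def by (intro sum.cong refl suminf_mult[symmetric] summable_sqrt_term) auto
  also have "\<dots> = (\<Sum>i=1..n. \<Sum>j. \<Sum>l=1..n. f j i l)"
    by (intro sum.cong refl suminf_sum[symmetric] sf) auto
  also have "\<dots> = (\<Sum>j. \<Sum>i=1..n. \<Sum>l=1..n. f j i l)"
    by (intro suminf_sum[symmetric] summable_sum sf) auto
  also have "\<dots> = (\<Sum>j. complex_of_real (sqrt_coeff j) * inner_upto n ?z (gram_pow j ?z))"
  proof (rule arg_cong[where f=suminf], rule ext)
    fix j
    have "gram_pow j ?z i = (\<Sum>l=1..n. v l * gram_pow j (basis_vec l) i)" for i
      using gram_pow_expand[OF z, of j] by (simp add: proj_def)
    then have "inner_upto n ?z (gram_pow j ?z)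
        = (\<Sum>i=1..n. cnj (v i) * (\<Sum>l=1..n. v l * gram_pow j (basis_vec l) i))"
      unfolding inner_upto_def by (intro sum.cong) (auto simp: proj_def)
    then show "(\<Sum>i=1..n. \<Sum>l=1..n. f j i l) = complex_of_real (sqrt_coeff j) * inner_upto n ?z (gram_pow j ?z)"
      unfolding f_def sqrt_term_def by (simp add: sum_distrib_left mult_ac)
  qed
  finally show ?thesis .
qed

lemma inner_upto_sqrt_op_nonneg:
  "\<exists>s. inner_upto n v (mat_op n sqrt_cols v) = complex_of_real s \<and> 0 \<le> s"
proof -
  let ?z = "proj n v"
  have z: "supported_on n ?z" by (rule supported_on_proj)
  define r where "r j = Re (inner_upto n ?z (gram_pow j ?z))" for j
  define Q where "Q = (norm_upto n ?z)^2"
  have r: "inner_upto n ?z (gram_pow j ?z) = complex_of_real (r j) \<and> 0 \<le> r j \<and> r j \<le> Q" for j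
    using gram_pow_quadratic_form_bounds[OF z, of j] unfolding r_def Q_def by auto
  have r0: "r 0 = Q" unfolding r_def Q_def by (simp add: inner_upto_self)
  have s1: "summable (\<lambda>j. sqrt_coeff j * r j)"
  proof (rule summable_comparison_test'[OF summable_mult2[OF summable_abs_sqrt_coeff, of Q]])
    fix j :: nat
    assume "j \<ge> 0"
    show "norm (sqrt_coeff j * r j) \<le> \<bar>sqrt_coeff j\<bar> * Q"
      using r[of j] by (simp add: abs_mult mult_left_mono)
  qed
  have "inner_upto n v (mat_op n sqrt_cols v) = (\<Sum>j. complex_of_real (sqrt_coeff j * r j))"
    unfolding inner_upto_sqrt_op using r by simp
  also have "\<dots> = complex_of_real (\<Sum>j. sqrt_coeff j * r j)"
    by (rule suminf_of_real[OF s1, symmetric])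
  moreover have "suminf sqrt_coeff * Q \<le> (\<Sum>j. sqrt_coeff j * r j)"
    unfolding suminf_mult2[OF summable_sqrt_coeff]
  proof (rule suminf_le[OF _ summable_mult2[OF summable_sqrt_coeff] s1])
    fix j
    show "sqrt_coeff j * Q \<le> sqrt_coeff j * r j"
      using r0 r[of j] sqrt_coeff_nonpos[of j] by (cases "j = 0") (auto simp: mult_left_mono_neg)
  qed
  moreover have "0 \<le> suminf sqrt_coeff * Q"
    using suminf_sqrt_coeff_nonneg unfolding Q_def by simp
  ultimately show ?thesis by auto
qed

lemma defect_has_positive_sqrt: "\<exists>B. positive_op B \<and> (\<forall>v\<in>l2. B (B v) = defect v)"
proof (intro exI conjI ballI)
  show "positive_op (mat_op n sqrt_cols)"
    unfolding positive_op_def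
  proof (intro conjI ballI bounded_mat_op[OF cols_supported_sqrt_cols])
    fix v
    obtain s where s: "inner_upto n v (mat_op n sqrt_cols v) = complex_of_real s" "0 \<le> s"
      using inner_upto_sqrt_op_nonneg by blast
    then have "l2_inner v (mat_op n sqrt_cols v) = complex_of_real s"
      using l2_inner_supported_right[OF mat_op_supported[OF cols_supported_sqrt_cols]] by simp
    then show "l2_inner v (mat_op n sqrt_cols v) \<in> \<real>" "0 \<le> Re (l2_inner v (mat_op n sqrt_cols v))"
      using s(2) by auto
  qed
qed (rule sqrt_op_square)

lemma norm_eq_imp_zero_if_sqrt_range_has_dim:
  assumes S: "positive_op S" and SS: "\<forall>v\<in>l2. S (S v) = defect v"
    and dim: "has_dim (l2_closure (S ` l2)) n"
    and z: "supported_on n z" and eq: "norm_upto q (mat_op n a z) = norm_upto n z"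
  shows "z = (\<lambda>m. 0)"
proof -
  have zl: "z \<in> l2" by (rule supported_in_l2[OF z])
  have kernel: "S u = (\<lambda>m. 0)" if u: "u \<in> l2" "inner_upto n u (defect u) = 0" for u
    using positive_op_kernel[OF S u(1)] SS u l2_inner_supported_right[OF defect_supported] by simp
  have Sz: "S z = (\<lambda>m. 0)"
    using kernel[OF zl] unfolding inner_upto_defect eq by simp
  have Sm: "S (basis_vec m) = (\<lambda>m. 0)" if m: "n < m" for m
  proof (rule kernel[OF basis_vec_in_l2])
    show "1 \<le> m" using m by simp
    show "inner_upto n (basis_vec m) (defect (basis_vec m)) = 0"
      using m unfolding inner_upto_def basis_vec_def by simp
  qed
  have range: "supported_on n w \<and> inner_upto n z w = 0" if w: "w \<in> S ` l2" for w
  proof -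
    obtain v where v: "v \<in> l2" "w = S v" using w by blast
    have wl: "w \<in> l2" using S v unfolding positive_op_def by (blast intro: bounded_op_l2)
    have "w m = 0" if m: "n < m" for m
      using positive_op_kernel_orthogonal_range[OF S basis_vec_in_l2 Sm[OF m] v(1)]
        l2_inner_basis_vec[of m w] m v(2) by simp
    then have "supported_on n w" using l2_at_0[OF wl] unfolding supported_on_def by auto
    moreover have "inner_upto n z w = 0"
      using positive_op_kernel_orthogonal_range[OF S zl Sz v(1)] l2_inner_supported_left[OF z] v(2)
      by simp
    ultimately show ?thesis ..
  qed
  have "z \<in> l2_closure (S ` l2)"
    using has_dim_supported_mem[OF dim _ z] l2_closure_supported_orthogonal[OF range] by blast
  then have "inner_upto n z z = 0"
    using l2_closure_supported_orthogonal[OF range] by blast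
  then show ?thesis
    using supported_norm_upto_eq_0D[OF z] by (simp add: inner_upto_self)
qed

lemma norm_positive_sqrt_defect:
  assumes S: "positive_op S" "\<forall>v\<in>l2. S (S v) = defect v" and s: "s \<in> l2"
  shows "(l2_norm (S s))^2 = (norm_upto n s)^2 - (norm_upto q (mat_op n a s))^2"
proof -
  have Ss: "S s \<in> l2"
    using S(1) s unfolding positive_op_def by (blast intro: bounded_op_l2)
  have "complex_of_real ((l2_norm (S s))^2) = l2_inner (S s) (S s)"
    by (rule l2_inner_self[OF Ss, symmetric])
  also have "\<dots> = l2_inner s (S (S s))"
    by (rule positive_op_self_adjoint[OF S(1) s Ss])
  also have "\<dots> = inner_upto n s (defect s)"
    using S(2) s l2_inner_supported_right[OF defect_supported] by simp
  also have "\<dots> = complex_of_real ((norm_upto n s)^2 - (norm_upto q (mat_op n a s))^2)"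
    by (rule inner_upto_defect)
  finally show ?thesis by (metis of_real_eq_iff)
qed

lemma norm_defect_sq_le:
  assumes z: "supported_on n z"
  shows "(norm_upto n (defect z))^2 \<le> (norm_upto n z)^2 - (norm_upto q (mat_op n a z))^2"
proof -
  obtain S where S: "positive_op S" "\<forall>v\<in>l2. S (S v) = defect v"
    using defect_has_positive_sqrt by blast
  have zl: "z \<in> l2" by (rule supported_in_l2[OF z])
  have Sz: "S z \<in> l2"
    using S(1) zl unfolding positive_op_def by (blast intro: bounded_op_l2)
  have "(norm_upto n (defect z))^2 = (l2_norm (S (S z)))^2"
    using S(2) zl l2_norm_supported[OF defect_supported, of z] by simp
  also have "\<dots> = (norm_upto n (S z))^2 - (norm_upto q (mat_op n a (S z)))^2"
    by (rule norm_positive_sqrt_defect[OF S Sz])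
  also have "\<dots> \<le> (l2_norm (S z))^2"
    using power_mono[OF norm_upto_le_l2_norm[OF Sz, of n] norm_upto_nonneg, of 2]
      zero_le_power2[of "norm_upto q (mat_op n a (S z))"]
    by linarith
  also have "\<dots> = (norm_upto n z)^2 - (norm_upto q (mat_op n a z))^2"
    by (rule norm_positive_sqrt_defect[OF S zl])
  finally show ?thesis .
qed

end

locale strict_matrix_contraction = matrix_contraction +
  assumes strict:
    "\<And>z. supported_on n z \<Longrightarrow> z \<noteq> (\<lambda>m. 0) \<Longrightarrow> norm_upto q (mat_op n a z) < norm_upto n z"
begin

lemma defect_inj:
  assumes z: "supported_on n z" and d: "\<And>i. 1 \<le> i \<Longrightarrow> i \<le> n \<Longrightarrow> defect z i = 0"
  shows "z = (\<lambda>m. 0)"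
proof (rule ccontr)
  assume "z \<noteq> (\<lambda>m. 0)"
  then have "norm_upto q (mat_op n a z) < norm_upto n z" by (rule strict[OF z])
  moreover have "inner_upto n z (defect z) = 0"
    unfolding inner_upto_def using d by simp
  then have "(norm_upto n z)^2 - (norm_upto q (mat_op n a z))^2 = 0"
    unfolding inner_upto_defect by (metis of_real_eq_0_iff)
  then have "norm_upto q (mat_op n a z) = norm_upto n z"
    using norm_upto_nonneg by (simp add: power2_eq_iff_nonneg)
  ultimately show False by simp
qed

lemma defect_solvable: "\<exists>u. supported_on n u \<and> (\<forall>i. 1 \<le> i \<and> i \<le> n \<longrightarrow> defect u i = y i)"
proof -
  define restr where "restr c = (\<lambda>i. if 1 \<le> i \<and> i \<le> n then c i else (0::complex))" for c
  have supp: "supported_on n (restr c)" for c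
    unfolding supported_on_def restr_def by auto
  have restrict: "defect (restr c) i = (\<Sum>l=1..n. c l * defect_cols l i)" for c i
    unfolding defect_eq_mat_op mat_op_def restr_def by (rule sum.cong) auto
  have "\<exists>c. \<forall>i. 1 \<le> i \<and> i \<le> n \<longrightarrow> (\<Sum>l=1..n. c l * defect_cols l i) = y i"
  proof (rule cols_independent_imp_spanning)
    fix c l
    assume h: "\<And>i. 1 \<le> i \<Longrightarrow> i \<le> n \<Longrightarrow> (\<Sum>l=1..n. c l * defect_cols l i) = 0"
      and l: "1 \<le> l" "l \<le> n"
    have "restr c = (\<lambda>m. 0)"
    proof (rule defect_inj[OF supp])
      fix i
      assume "1 \<le> i" "i \<le> n"
      then show "defect (restr c) i = 0" unfolding restrict by (rule h)
    qed
    then have "restr c l = 0" by simp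
    then show "c l = 0" using l by (simp add: restr_def)
  qed
  then obtain c where "\<forall>i. 1 \<le> i \<and> i \<le> n \<longrightarrow> defect (restr c) i = y i"
    unfolding restrict by blast
  then show ?thesis using supp by blast
qed

lemma defect_inverse_formula:
  assumes u: "\<And>j. supported_on n (u j)"
      "\<And>j i. 1 \<le> i \<and> i \<le> n \<Longrightarrow> defect (u j) i = basis_vec j i"
    and z: "supported_on n z"
  shows "z = (\<lambda>i. \<Sum>j=1..n. defect z j * u j i)"
proof -
  define w where "w i = (\<Sum>j=1..n. defect z j * u j i)" for i
  have "defect w i = defect z i" if i: "1 \<le> i" "i \<le> n" for i
  proof -
    have "defect w i = (\<Sum>j=1..n. defect z j * defect (u j) i)"
      unfolding w_def defect_eq_mat_op mat_op_lincomb by simp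
    also have "\<dots> = (\<Sum>j=1..n. defect z j * basis_vec j i)"
      by (rule sum.cong) (use u(2) i in auto)
    also have "\<dots> = defect z i"
      using i by (intro sum_basis_vec) simp
    finally show ?thesis .
  qed
  then have "defect (\<lambda>m. 1 * z m + (-1) * w m) i = 0" if "1 \<le> i" "i \<le> n" for i
    using that unfolding defect_eq_mat_op mat_op_linear by simp
  moreover have "supported_on n (\<lambda>m. 1 * z m + (-1) * w m)"
    using z u(1) unfolding supported_on_def w_def by simp
  ultimately have "(\<lambda>m. 1 * z m + (-1) * w m) = (\<lambda>m. 0)"
    using defect_inj by blast
  then show ?thesis unfolding w_def by (simp add: fun_eq_iff)
qed

lemma norm_le_norm_defect:
  "\<exists>K>0. \<forall>z. supported_on n z \<longrightarrow> norm_upto n z \<le> K * norm_upto n (defect z)"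
proof -
  have "\<forall>j. \<exists>u. supported_on n u \<and> (\<forall>i. 1 \<le> i \<and> i \<le> n \<longrightarrow> defect u i = basis_vec j i)"
    using defect_solvable by blast
  then obtain u where u: "\<And>j. supported_on n (u j)"
    "\<And>j i. 1 \<le> i \<and> i \<le> n \<Longrightarrow> defect (u j) i = basis_vec j i"
    by metis
  define K where "K = (\<Sum>i=1..n. \<Sum>j=1..n. cmod (u j i)) + 1"
  have "norm_upto n z \<le> K * norm_upto n (defect z)" if z: "supported_on n z" for z
  proof -
    have "cmod (z i) \<le> norm_upto n (defect z) * (\<Sum>j=1..n. cmod (u j i))" for i
    proof -
      have "z i = (\<Sum>j=1..n. defect z j * u j i)"
        using fun_cong[OF defect_inverse_formula[OF u(1) u(2) z], of i] by simp
      then have "cmod (z i) \<le> (\<Sum>j=1..n. cmod (defect z j * u j i))"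
        by (simp add: norm_sum)
      also have "\<dots> \<le> (\<Sum>j=1..n. norm_upto n (defect z) * cmod (u j i))"
        by (intro sum_mono) (simp add: norm_mult mult_right_mono coord_le_norm_upto)
      finally show ?thesis by (simp add: sum_distrib_left)
    qed
    then have "norm_upto n z \<le> (\<Sum>i=1..n. norm_upto n (defect z) * (\<Sum>j=1..n. cmod (u j i)))"
      unfolding norm_upto_def by (intro order_trans[OF L2_set_le_sum sum_mono]) auto
    also have "\<dots> = norm_upto n (defect z) * (K - 1)"
      unfolding K_def by (simp add: sum_distrib_left)
    also have "\<dots> \<le> K * norm_upto n (defect z)"
      using norm_upto_nonneg[of n "defect z"] by (simp add: algebra_simps)
    finally show ?thesis .
  qed
  moreover have "K > 0" unfolding K_def by (simp add: sum_nonneg add_nonneg_pos)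
  ultimately show ?thesis by blast
qed

lemma mat_op_uniformly_strict:
  "\<exists>\<mu>>0. \<mu> \<le> 1 \<and> (\<forall>z. supported_on n z \<longrightarrow> (norm_upto q (mat_op n a z))^2 \<le> (1 - \<mu>) * (norm_upto n z)^2)"
proof -
  obtain K where K: "K > 0" "\<And>z. supported_on n z \<Longrightarrow> norm_upto n z \<le> K * norm_upto n (defect z)"
    using norm_le_norm_defect by blast
  define \<mu> where "\<mu> = 1 / (K^2 + 1)"
  have K2: "K^2 + 1 > 0" by (rule add_nonneg_pos) simp_all
  have "(norm_upto q (mat_op n a z))^2 \<le> (1 - \<mu>) * (norm_upto n z)^2" if z: "supported_on n z" for z
  proof -
    have "(norm_upto n z)^2 \<le> (K * norm_upto n (defect z))^2"
      by (rule power_mono[OF K(2)[OF z] norm_upto_nonneg])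
    also have "\<dots> = K^2 * (norm_upto n (defect z))^2"
      by (simp add: power_mult_distrib)
    also have "\<dots> \<le> K^2 * ((norm_upto n z)^2 - (norm_upto q (mat_op n a z))^2)"
      by (rule mult_left_mono[OF norm_defect_sq_le[OF z]]) simp
    finally have "(K^2 + 1) * (norm_upto q (mat_op n a z))^2 \<le> K^2 * (norm_upto n z)^2"
      using power_mono[OF contraction[OF z] norm_upto_nonneg, of 2] by (simp add: algebra_simps)
    then have "(norm_upto q (mat_op n a z))^2 \<le> K^2 / (K^2 + 1) * (norm_upto n z)^2"
      using K2 by (simp add: field_simps)
    also have "K^2 / (K^2 + 1) = 1 - \<mu>"
      unfolding \<mu>_def using K2 by (simp add: field_simps)
    finally show ?thesis .
  qed
  moreover have "\<mu> > 0" "\<mu> \<le> 1"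
    unfolding \<mu>_def using K2 by (auto simp: field_simps)
  ultimately show ?thesis by blast
qed

lemma mat_adj_uniformly_strict:
  "\<exists>\<mu>>0. \<mu> \<le> 1 \<and> (\<forall>y. (norm_upto n (mat_adj n q a y))^2 \<le> (1 - \<mu>) * (norm_upto q y)^2)"
proof -
  obtain \<mu> where \<mu>: "\<mu> > 0" "\<mu> \<le> 1"
    and bound: "\<And>z. supported_on n z \<Longrightarrow> (norm_upto q (mat_op n a z))^2 \<le> (1 - \<mu>) * (norm_upto n z)^2"
    using mat_op_uniformly_strict by blast
  have "(norm_upto n (mat_adj n q a y))^2 \<le> (1 - \<mu>) * (norm_upto q y)^2" for y
    by (rule mat_adj_norm_sq_le[OF cols _ bound]) (use \<mu> in simp)
  then show ?thesis using \<mu> by blast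
qed

lemma has_dim_defect_image: "has_dim (defect ` l2) n"
proof -
  have "defect ` l2 = {v. supported_on n v}"
  proof (intro equalityI subsetI)
    fix y
    assume "y \<in> {v. supported_on n v}"
    then have y: "supported_on n y" by simp
    obtain u where u: "supported_on n u" "\<And>i. 1 \<le> i \<and> i \<le> n \<Longrightarrow> defect u i = y i"
      using defect_solvable[of y] by blast
    have "defect u m = y m" for m
    proof (cases "m \<in> {1..n}")
      case True
      then show ?thesis using u(2) by simp
    next
      case False
      then show ?thesis
        using supported_onD[OF defect_supported False] supported_onD[OF y False] by simp
    qed
    then have "defect u = y" by (rule ext)
    then show "y \<in> defect ` l2" using supported_in_l2[OF u(1)] by blast
  qed (auto intro: defect_supported)
  then show ?thesis using has_dim_supported_on by simp
qed

end



section \<open>The perturbed shift\<close>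

lemma shift_shift: "shift a (shift b y) = shift (a + b) y"
  unfolding shift_def by (auto intro!: ext simp: diff_diff_add)

lemma funpow_shift: "1 \<le> j \<Longrightarrow> (shift k ^^ j) y = shift (k * j) y"
proof (induction j rule: dec_induct)
  case base then show ?case by simp
next
  case (step j) then show ?case by (simp add: shift_shift)
qed

lemma shift_plus: "shift a (\<lambda>m. f m + g m) = (\<lambda>m. shift a f m + shift a g m)"
  unfolding shift_def by (auto intro!: ext)

lemma shift_sum: "shift a (\<lambda>m. \<Sum>j\<in>J. w j m) = (\<lambda>m. \<Sum>j\<in>J. shift a (w j) m)"
  unfolding shift_def by (auto intro!: ext)

lemma shift_lincomb: "shift a (\<lambda>m. \<Sum>j\<in>J. c j * w j m) = (\<lambda>m. \<Sum>j\<in>J. c j * shift a (w j) m)"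
  unfolding shift_def by (auto intro!: ext)


lemma sum_atLeast1_Suc_split:
  fixes f :: "nat \<Rightarrow> nat \<Rightarrow> 'a::comm_monoid_add"
  assumes "1 \<le> r"
  shows "(\<Sum>j=1..r. f j (Suc r - j)) = f 1 r + (\<Sum>j=1..r-1. f (Suc j) (r - j))"
proof -
  obtain r' where r': "r = Suc r'" using assms by (cases r) auto
  have "{1..r} = insert 1 {Suc 1..Suc r'}" using r' by auto
  then have "(\<Sum>j=1..r. f j (Suc r - j)) = f 1 r + (\<Sum>j=Suc 1..Suc r'. f j (Suc r - j))"
    by simp
  also have "(\<Sum>j=Suc 1..Suc r'. f j (Suc r - j)) = (\<Sum>j=1..r'. f (Suc j) (Suc r - Suc j))"
    by (rule sum.shift_bounds_cl_Suc_ivl)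
  finally show ?thesis using r' by simp
qed

locale perturbed_shift =
  fixes n k :: nat and x :: "nat \<Rightarrow> nat \<Rightarrow> complex"
begin

text \<open>The columns of F_1 = F + S_k P_n: the -1 in F e_i cancels S_k e_i = e_(i+k).\<close>

definition F1_cols :: "nat \<Rightarrow> nat \<Rightarrow> complex" where
  "F1_cols i m = (if 1 \<le> m \<and> m \<le> n + k then x i m else 0)"

sublocale column_matrix n "n + k" F1_cols
  by unfold_locales (auto simp: cols_supported_def supported_on_def F1_cols_def)

text \<open>T = tail_shift + F_1, where tail_shift = S_k (I - P_n).\<close>

definition tail_shift :: "Defs.vec \<Rightarrow> Defs.vec" where
  "tail_shift v = (\<lambda>m. if n + k < m then v (m - k) else 0)"

definition tail_shift_adj :: "Defs.vec \<Rightarrow> Defs.vec" where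
  "tail_shift_adj u = (\<lambda>i. if n < i then u (i + k) else 0)"

definition T_adj :: "Defs.vec \<Rightarrow> Defs.vec" where
  "T_adj u = (\<lambda>i. tail_shift_adj u i + mat_adj n (n + k) F1_cols u i)"

lemma F1op_eq_mat_op: "F1op n k x = mat_op n F1_cols"
proof (intro ext)
  fix v :: Defs.vec and m :: nat
  have d: "(\<Sum>i=1..n. v i * (if m = i + k then 1 else 0))
      = (if k < m \<and> m - k \<le> n then v (m - k) else 0)"
  proof -
    have "(\<Sum>i=1..n. v i * (if m = i + k then 1 else 0))
        = (\<Sum>i\<in>{1..n}. if i = m - k \<and> k < m then v i else 0)"
      by (rule sum.cong) auto
    also have "\<dots> = (if k < m \<and> m - k \<le> n then v (m - k) else 0)"
      by (cases "k < m") (auto simp: sum.delta')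
    finally show ?thesis .
  qed
  show "F1op n k x v m = mat_op n F1_cols v m"
  proof (cases "1 \<le> m \<and> m \<le> n + k")
    case True
    have "F1op n k x v m = (\<Sum>i=1..n. v i * x i m) - (\<Sum>i=1..n. v i * (if m = i + k then 1 else 0))
        + (if k < m \<and> m - k \<le> n then v (m - k) else 0)"
      unfolding F1op_def Fop_def shift_def proj_def using True
      by (auto simp: algebra_simps sum_subtractf[symmetric] intro!: sum.cong)
    also have "\<dots> = mat_op n F1_cols v m"
      unfolding d mat_op_def F1_cols_def using True by simp
    finally show ?thesis .
  next
    case False
    then show ?thesis
      unfolding F1op_def Fop_def shift_def proj_def mat_op_def F1_cols_def by auto
  qed
qed

lemma Top_eq_tail_shift: "Top n k x v = (\<lambda>m. tail_shift v m + mat_op n F1_cols v m)"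
proof (intro ext)
  fix m
  have "shift k v m = tail_shift v m + shift k (proj n v) m"
    unfolding shift_def tail_shift_def proj_def by auto
  then show "Top n k x v m = tail_shift v m + mat_op n F1_cols v m"
    unfolding Top_def F1op_eq_mat_op[symmetric] F1op_def by simp
qed

lemma summable_tail_shift: "v \<in> l2 \<Longrightarrow> summable (\<lambda>m. (cmod (tail_shift v m))^2)"
proof -
  assume v: "v \<in> l2"
  have "summable (\<lambda>m. (cmod (tail_shift v (m + k)))^2)"
  proof (rule summable_comparison_test')
    show "summable (\<lambda>m. (cmod (v m))^2)" using l2_summable[OF v] .
    fix m :: nat assume "m \<ge> 0"
    show "norm ((cmod (tail_shift v (m + k)))^2) \<le> (cmod (v m))^2"
      unfolding tail_shift_def by auto
  qed
  then show ?thesis using summable_iff_shift[of "\<lambda>j. (cmod (tail_shift v j))^2" k] by simp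
qed

lemma tail_shift_in_l2: "v \<in> l2 \<Longrightarrow> tail_shift v \<in> l2"
  using summable_tail_shift unfolding l2_def tail_shift_def by auto

lemma summable_tail_shift_adj: "u \<in> l2 \<Longrightarrow> summable (\<lambda>m. (cmod (tail_shift_adj u m))^2)"
proof -
  assume u: "u \<in> l2"
  have s: "summable (\<lambda>m. (cmod (u (m + k)))^2)"
    using l2_summable[OF u] summable_iff_shift[of "\<lambda>j. (cmod (u j))^2" k] by simp
  show ?thesis
  proof (rule summable_comparison_test'[OF s])
    fix m :: nat assume "m \<ge> 0"
    show "norm ((cmod (tail_shift_adj u m))^2) \<le> (cmod (u (m + k)))^2"
      unfolding tail_shift_adj_def by auto
  qed
qed

lemma tail_shift_adj_in_l2: "u \<in> l2 \<Longrightarrow> tail_shift_adj u \<in> l2"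
  using summable_tail_shift_adj unfolding l2_def tail_shift_adj_def by auto

lemma norm_tail_shift_adj_le:
  assumes u: "u \<in> l2"
  shows "(l2_norm (tail_shift_adj u))^2 \<le> (l2_norm u)^2"
proof -
  have s: "summable (\<lambda>m. (cmod (u (m + k)))^2)"
    using l2_summable[OF u] summable_iff_shift[of "\<lambda>j. (cmod (u j))^2" k] by simp
  have "(\<Sum>m. (cmod (tail_shift_adj u m))^2) \<le> (\<Sum>m. (cmod (u (m + k)))^2)"
    by (rule suminf_le[OF _ summable_tail_shift_adj[OF u] s]) (auto simp: tail_shift_adj_def)
  also have "\<dots> = (\<Sum>m. (cmod (u m))^2) - (\<Sum>i<k. (cmod (u i))^2)"
    by (rule suminf_minus_initial_segment[OF l2_summable[OF u]])
  also have "\<dots> \<le> (\<Sum>m. (cmod (u m))^2)"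
    by (simp add: sum_nonneg)
  finally have "(\<Sum>m. (cmod (tail_shift_adj u m))^2) \<le> (\<Sum>m. (cmod (u m))^2)" .
  moreover have "0 \<le> (\<Sum>m. (cmod (tail_shift_adj u m))^2)"
    by (rule suminf_nonneg[OF summable_tail_shift_adj[OF u]]) simp
  moreover have "0 \<le> (\<Sum>m. (cmod (u m))^2)"
    by (rule suminf_nonneg[OF l2_summable[OF u]]) simp
  ultimately show ?thesis unfolding l2_norm_def by simp
qed

lemma l2_inner_tail_shift_adj:
  assumes u: "u \<in> l2" and v: "v \<in> l2"
  shows "l2_inner (tail_shift v) u = l2_inner v (tail_shift_adj u)"
proof -
  define g where "g m = cnj (tail_shift v m) * u m" for m
  have sg: "summable g" unfolding g_def by (rule l2_inner_summable[OF tail_shift_in_l2[OF v] u])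
  have "l2_inner v (tail_shift_adj u) = (\<Sum>m. g (m + k))"
    unfolding l2_inner_def g_def tail_shift_def tail_shift_adj_def
    by (rule arg_cong[where f=suminf]) auto
  also have "\<dots> = (\<Sum>m. g m) - (\<Sum>i<k. g i)"
    by (rule suminf_minus_initial_segment[OF sg])
  also have "(\<Sum>i<k. g i) = 0"
    unfolding g_def tail_shift_def by (auto intro!: sum.neutral)
  finally show ?thesis unfolding g_def l2_inner_def by simp
qed

lemma T_adj_linear: "T_adj (\<lambda>m. \<alpha> * u m + \<beta> * w m) = (\<lambda>m. \<alpha> * T_adj u m + \<beta> * T_adj w m)"
  unfolding T_adj_def mat_adj_linear tail_shift_adj_def by (auto simp: algebra_simps intro!: ext)

lemma T_adj_in_l2: "u \<in> l2 \<Longrightarrow> T_adj u \<in> l2"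
  using l2_lincomb[OF tail_shift_adj_in_l2 supported_in_l2[OF mat_adj_supported], of u 1 1]
  unfolding T_adj_def by simp

lemma bounded_T_adj: "bounded_op T_adj"
proof -
  let ?A = "mat_adj n (n + k) F1_cols"
  obtain C where C: "\<forall>v\<in>l2. l2_norm (?A v) \<le> C * l2_norm v"
    using bounded_mat_adj[of n "n + k" F1_cols] unfolding bounded_op_def by blast
  have "l2_norm (T_adj u) \<le> sqrt (1 + C^2) * l2_norm u" if u: "u \<in> l2" for u
  proof -
    have Au: "summable (\<lambda>m. (cmod (?A u m))^2)"
      using supported_in_l2[OF mat_adj_supported] l2_summable by blast
    have "(cmod (T_adj u m))^2 = (cmod (tail_shift_adj u m))^2 + (cmod (?A u m))^2" for m
      unfolding T_adj_def tail_shift_adj_def mat_adj_def by auto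
    then have "(\<Sum>m. (cmod (T_adj u m))^2) = (\<Sum>m. (cmod (tail_shift_adj u m))^2) + (\<Sum>m. (cmod (?A u m))^2)"
      using suminf_add[OF summable_tail_shift_adj[OF u] Au] by simp
    then have "(l2_norm (T_adj u))^2 = (l2_norm (tail_shift_adj u))^2 + (l2_norm (?A u))^2"
      using suminf_nonneg[OF summable_tail_shift_adj[OF u]] suminf_nonneg[OF Au]
      unfolding l2_norm_def by simp
    also have "\<dots> \<le> (l2_norm u)^2 + (C * l2_norm u)^2"
    proof (rule add_mono[OF norm_tail_shift_adj_le[OF u]])
      show "(l2_norm (?A u))^2 \<le> (C * l2_norm u)^2"
        using C u l2_norm_nonneg supported_in_l2[OF mat_adj_supported] by (metis power_mono)
    qed
    also have "\<dots> = (sqrt (1 + C^2) * l2_norm u)^2"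
      by (simp add: power_mult_distrib algebra_simps)
    finally show ?thesis
      by (rule power2_le_imp_le) (simp add: l2_norm_nonneg[OF u])
  qed
  then show ?thesis unfolding bounded_op_def using T_adj_in_l2 T_adj_linear by blast
qed

lemma l2_inner_Top_adj:
  assumes u: "u \<in> l2" and v: "v \<in> l2"
  shows "l2_inner (Top n k x v) u = l2_inner v (T_adj u)"
proof -
  have fv: "mat_op n F1_cols v \<in> l2" using supported_in_l2[OF mat_op_supported[OF cols]] .
  have fu: "mat_adj n (n + k) F1_cols u \<in> l2" using supported_in_l2[OF mat_adj_supported] .
  have "l2_inner (Top n k x v) u = l2_inner (\<lambda>m. 1 * tail_shift v m + 1 * mat_op n F1_cols v m) u"
    unfolding Top_eq_tail_shift by simp
  also have "\<dots> = l2_inner (tail_shift v) u + l2_inner (mat_op n F1_cols v) u"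
    using l2_inner_lincomb_left[OF u tail_shift_in_l2[OF v] fv, of 1 1] by simp
  also have "\<dots> = l2_inner v (tail_shift_adj u) + l2_inner v (mat_adj n (n + k) F1_cols u)"
    using l2_inner_tail_shift_adj[OF u v] l2_inner_mat_op_adj[OF cols] by simp
  also have "\<dots> = l2_inner v (\<lambda>m. 1 * tail_shift_adj u m + 1 * mat_adj n (n + k) F1_cols u m)"
    using l2_inner_lincomb_right[OF v tail_shift_adj_in_l2[OF u] fu, of 1 1] by simp
  also have "\<dots> = l2_inner v (T_adj u)"
    unfolding T_adj_def by simp
  finally show ?thesis .
qed

lemma op_adj_Top: "u \<in> l2 \<Longrightarrow> op_adj (Top n k x) u = T_adj u"
  using op_adj_eqI[OF bounded_T_adj, where A="Top n k x"] l2_inner_Top_adj by blast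

lemma mat_op_F1_cols_vanishes: "n + k < m \<Longrightarrow> mat_op n F1_cols v m = 0"
  unfolding mat_op_def F1_cols_def by simp

lemma defect_Top:
  assumes v: "v \<in> l2" and Tv: "Top n k x v \<in> l2"
  shows "(\<lambda>m. v m - op_adj (Top n k x) (Top n k x v) m) = defect v"
proof (intro ext)
  fix i
  have "mat_adj n (n + k) F1_cols (Top n k x v) = mat_adj n (n + k) F1_cols (mat_op n F1_cols v)"
    unfolding mat_adj_def Top_eq_tail_shift tail_shift_def by (auto intro!: ext sum.cong)
  then have eq: "op_adj (Top n k x) (Top n k x v) i = tail_shift_adj (Top n k x v) i + gram v i"
    unfolding op_adj_Top[OF Tv] T_adj_def gram_def by simp
  show "v i - op_adj (Top n k x) (Top n k x v) i = defect v i"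
  proof (cases "n < i")
    case True
    have "tail_shift_adj (Top n k x v) i = v i"
      unfolding tail_shift_adj_def Top_eq_tail_shift tail_shift_def
      using True mat_op_F1_cols_vanishes[of "i + k" v] by simp
    moreover have "gram v i = 0" unfolding gram_def mat_adj_def using True by simp
    ultimately show ?thesis unfolding eq defect_def proj_def using True by simp
  next
    case False
    have t0: "tail_shift_adj (Top n k x v) i = 0" unfolding tail_shift_adj_def using False by simp
    show ?thesis
    proof (cases "i = 0")
      case True
      have "gram v i = 0" unfolding gram_def mat_adj_def using True by simp
      then show ?thesis unfolding eq defect_def proj_def using True t0 l2_at_0[OF v] by simp
    next
      case False2: False
      then show ?thesis unfolding eq defect_def proj_def using False t0 by simp
    qed
  qed
qed



definition proj_compl :: "Defs.vec \<Rightarrow> Defs.vec" where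
  "proj_compl w = (\<lambda>m. w m - proj n w m)"

lemma proj_compl_vanishes: "1 \<le> i \<Longrightarrow> i \<le> n \<Longrightarrow> proj_compl w i = 0"
  unfolding proj_compl_def proj_def by simp

lemma Top_eq_shift_proj_compl: "Top n k x w = (\<lambda>m. shift k (proj_compl w) m + mat_op n F1_cols w m)"
proof -
  have "tail_shift w = shift k (proj_compl w)"
    unfolding tail_shift_def shift_def proj_compl_def proj_def by (auto intro!: ext)
  then show ?thesis unfolding Top_eq_tail_shift by simp
qed

definition F1_iter :: "Defs.vec \<Rightarrow> nat \<Rightarrow> Defs.vec" where
  "F1_iter v r = (mat_op n F1_cols ^^ r) v"

lemma Frop_eq_F1_iter:
  "Frop n k x r v = (\<lambda>m. F1_iter v r m + (\<Sum>j=1..r-1. shift (k * j) (proj_compl (F1_iter v (r - j))) m))"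
  unfolding Frop_def F1op_eq_mat_op F1_iter_def proj_compl_def by (intro ext) (simp add: funpow_shift)

lemma shift_proj_compl_vanishes:
  "1 \<le> j \<Longrightarrow> 1 \<le> i \<Longrightarrow> i \<le> n \<Longrightarrow> shift (k * j) (proj_compl y) i = 0"
  unfolding shift_def using proj_compl_vanishes[of "i - k * j" y] by auto

lemma Frop_Suc:
  assumes r: "1 \<le> r"
  shows "Frop n k x (Suc r) v = Top n k x (Frop n k x r v)"
proof -
  define W where "W j = shift (k * j) (proj_compl (F1_iter v (r - j)))" for j
  define R where "R = Frop n k x r v"
  have R: "R = (\<lambda>m. F1_iter v r m + (\<Sum>j\<in>{1..r-1}. W j m))"
    unfolding R_def Frop_eq_F1_iter W_def ..
  have W0: "W j i = 0" if "j \<in> {1..r-1}" "1 \<le> i" "i \<le> n" for j i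
    unfolding W_def using shift_proj_compl_vanishes that by auto
  have F: "mat_op n F1_cols R = F1_iter v (Suc r)"
  proof -
    have "mat_op n F1_cols R = mat_op n F1_cols (F1_iter v r)"
      by (rule mat_op_cong) (simp add: R W0)
    then show ?thesis unfolding F1_iter_def by simp
  qed
  have Q: "proj_compl R = (\<lambda>m. proj_compl (F1_iter v r) m + (\<Sum>j\<in>{1..r-1}. W j m))"
  proof
    fix m
    show "proj_compl R m = proj_compl (F1_iter v r) m + (\<Sum>j\<in>{1..r-1}. W j m)"
      using proj_compl_vanishes[of m] W0[of _ m] unfolding proj_compl_def proj_def R by auto
  qed
  have "shift k (proj_compl R) = (\<lambda>m. shift k (proj_compl (F1_iter v r)) m
      + (\<Sum>j\<in>{1..r-1}. shift (k * Suc j) (proj_compl (F1_iter v (r - j))) m))"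
    unfolding Q shift_plus shift_sum W_def shift_shift by (simp add: algebra_simps)
  moreover have "(\<Sum>j\<in>{1..r}. shift (k * j) (proj_compl (F1_iter v (Suc r - j))) m)
      = shift k (proj_compl (F1_iter v r)) m
        + (\<Sum>j\<in>{1..r-1}. shift (k * Suc j) (proj_compl (F1_iter v (r - j))) m)" for m
    using sum_atLeast1_Suc_split[OF r, of "\<lambda>j i. shift (k * j) (proj_compl (F1_iter v i)) m"]
    by simp
  ultimately show ?thesis
    unfolding R_def[symmetric] Top_eq_shift_proj_compl F Frop_eq_F1_iter[of "Suc r"]
    by (simp add: algebra_simps)
qed

lemma Frop_eq_Top_pow_proj: "1 \<le> r \<Longrightarrow> Frop n k x r v = (Top n k x ^^ r) (proj n v)"
proof (induction r rule: dec_induct)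
  case base
  have "proj_compl (proj n v) = (\<lambda>m. 0)" unfolding proj_compl_def proj_def by (auto intro!: ext)
  moreover have "mat_op n F1_cols (proj n v) = mat_op n F1_cols v"
    by (rule mat_op_cong) (simp add: proj_def)
  moreover have "shift k (\<lambda>m. 0) = (\<lambda>m. 0)" unfolding shift_def by simp
  ultimately show ?case unfolding Frop_eq_F1_iter Top_eq_shift_proj_compl F1_iter_def by simp
next
  case (step r)
  then show ?case using Frop_Suc by simp
qed

definition F_cols :: "nat \<Rightarrow> nat \<Rightarrow> complex" where
  "F_cols i m = (if 1 \<le> m \<and> m \<le> n + k then x i m - (if m = i + k then 1 else 0) else 0)"

lemma Fop_eq_mat_op: "Fop n k x = mat_op n F_cols"
  unfolding Fop_def mat_op_def F_cols_def by (intro ext) simp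

lemma Top_lincomb:
  "Top n k x (\<lambda>m. \<Sum>j\<in>J. c j * w j m) = (\<lambda>m. \<Sum>j\<in>J. c j * Top n k x (w j) m)"
  unfolding Top_def Fop_eq_mat_op shift_lincomb mat_op_lincomb by (simp add: sum.distrib algebra_simps)

lemma Top_pow_lincomb:
  "(Top n k x ^^ r) (\<lambda>m. \<Sum>j\<in>J. c j * w j m) = (\<lambda>m. \<Sum>j\<in>J. c j * (Top n k x ^^ r) (w j) m)"
  by (induction r) (simp_all add: Top_lincomb)

lemma Top_supported: "supported_on N w \<Longrightarrow> n \<le> N \<Longrightarrow> supported_on (N + k) (Top n k x w)"
  unfolding supported_on_def Top_def shift_def Fop_def by auto

lemma Top_pow_basis_vec_supported:
  "1 \<le> l \<Longrightarrow> l \<le> n \<Longrightarrow> supported_on (n + k * r) ((Top n k x ^^ r) (basis_vec l))"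
proof (induction r)
  case 0 then show ?case using supported_basis_vec[of l n] by simp
next
  case (Suc r)
  have "supported_on (n + k * r + k) (Top n k x ((Top n k x ^^ r) (basis_vec l)))"
    by (rule Top_supported) (use Suc in auto)
  then show ?case by (simp add: algebra_simps)
qed

definition Top_pow_cols :: "nat \<Rightarrow> nat \<Rightarrow> nat \<Rightarrow> complex" where
  "Top_pow_cols r l = (if 1 \<le> l \<and> l \<le> n then (Top n k x ^^ r) (basis_vec l) else (\<lambda>m. 0))"

lemma cols_supported_Top_pow_cols: "cols_supported (n + k * r) (Top_pow_cols r)"
  using Top_pow_basis_vec_supported
  unfolding cols_supported_def supported_on_def Top_pow_cols_def by auto

lemma Top_pow_proj_eq_mat_op: "(Top n k x ^^ r) (proj n v) = mat_op n (Top_pow_cols r) v"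
proof -
  have ps: "supported_on n (proj n v)" unfolding supported_on_def proj_def by auto
  have "proj n v = (\<lambda>m. \<Sum>l\<in>{1..n}. v l * basis_vec l m)"
  proof -
    have "proj n v = (\<lambda>i. \<Sum>p=1..n. proj n v p * basis_vec p i)" by (rule supported_expand[OF ps])
    also have "\<dots> = (\<lambda>m. \<Sum>l\<in>{1..n}. v l * basis_vec l m)"
      by (intro ext sum.cong) (auto simp: proj_def)
    finally show ?thesis .
  qed
  then have "(Top n k x ^^ r) (proj n v) = (\<lambda>m. \<Sum>l\<in>{1..n}. v l * (Top n k x ^^ r) (basis_vec l) m)"
    by (simp add: Top_pow_lincomb)
  also have "\<dots> = mat_op n (Top_pow_cols r) v"
    unfolding mat_op_def Top_pow_cols_def by (intro ext sum.cong) auto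
  finally show ?thesis .
qed

lemma Frop_eq_mat_op: "1 \<le> r \<Longrightarrow> Frop n k x r = mat_op n (Top_pow_cols r)"
  using Frop_eq_Top_pow_proj Top_pow_proj_eq_mat_op by (intro ext) simp

lemma Top_supported_eq_F1:
  assumes "supported_on n z"
  shows "Top n k x z = mat_op n F1_cols z"
proof -
  have "z (m - k) = 0" if "n + k < m" for m
  proof -
    have "m - k \<notin> {1..n}" using that by auto
    then show ?thesis by (rule supported_onD[OF assms])
  qed
  then show ?thesis unfolding Top_eq_tail_shift tail_shift_def by (intro ext) simp
qed

lemma F1op_proj_compl: "F1op n k x (\<lambda>m. v m - proj n v m) = (\<lambda>m. 0)"
  unfolding F1op_eq_mat_op mat_op_def proj_def by (intro ext) simp

lemma F1op_range_supported: "(\<lambda>m. F1op n k x v m - proj (n + k) (F1op n k x v) m) = (\<lambda>m. 0)"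
  using supported_onD[OF mat_op_supported[OF cols, of n v]]
  unfolding F1op_eq_mat_op proj_def by (intro ext) auto

lemma proj_minus_F1_gram_eq_defect:
  "v \<in> l2 \<Longrightarrow> (\<lambda>m. proj n v m - op_adj (F1op n k x) (F1op n k x v) m) = defect v"
  unfolding F1op_eq_mat_op defect_def gram_def
  using op_adj_mat_op[OF cols supported_in_l2[OF mat_op_supported[OF cols]]] by simp

lemma matrix_contraction_if_contraction:
  assumes "is_contraction (Top n k x)"
  shows "matrix_contraction n (n + k) F1_cols"
proof (intro matrix_contraction.intro column_matrix_axioms matrix_contraction_axioms.intro)
  fix z assume z: "supported_on n z"
  have "l2_norm (Top n k x z) \<le> l2_norm z"
    using assms supported_in_l2[OF z] unfolding is_contraction_def by blast
  then show "norm_upto (n + k) (mat_op n F1_cols z) \<le> norm_upto n z"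
    unfolding Top_supported_eq_F1[OF z] l2_norm_supported[OF mat_op_supported[OF cols]]
      l2_norm_supported[OF z] .
qed

text \<open>op_sqrt picks some positive square root of I - T* T; any one will do, since the
  argument only uses positivity, the square and the dimension of the closed range.\<close>

lemma strict_matrix_contraction_if_defect_dim:
  assumes contr: "is_contraction (Top n k x)" and dim: "has_dim (defect_space (Top n k x)) n"
  shows "strict_matrix_contraction n (n + k) F1_cols"
proof -
  interpret matrix_contraction n "n + k" F1_cols
    by (rule matrix_contraction_if_contraction[OF contr])
  define D where "D = (\<lambda>v m. v m - op_adj (Top n k x) (Top n k x v) m)"
  have D: "D v = defect v" if "v \<in> l2" for v
    using contr that unfolding D_def is_contraction_def bounded_op_def by (blast intro: defect_Top)
  have "\<exists>S. positive_op S \<and> (\<forall>v\<in>l2. S (S v) = D v)"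
    using defect_has_positive_sqrt D by metis
  then have "positive_op (op_sqrt D) \<and> (\<forall>v\<in>l2. op_sqrt D (op_sqrt D v) = D v)"
    unfolding op_sqrt_def by (rule someI_ex)
  moreover have "has_dim (l2_closure (op_sqrt D ` l2)) n"
    using dim unfolding defect_space_def D_def .
  ultimately have "supported_on n z \<Longrightarrow> norm_upto (n + k) (mat_op n F1_cols z) = norm_upto n z
      \<Longrightarrow> z = (\<lambda>m. 0)" for z
    using norm_eq_imp_zero_if_sqrt_range_has_dim[of "op_sqrt D"] D by auto
  then show ?thesis
    using contraction by unfold_locales (meson order.not_eq_order_implies_strict)
qed

end



locale contractive_perturbed_shift = perturbed_shift +
  assumes contr: "is_contraction (Top n k x)"
    and defect_dim: "has_dim (defect_space (Top n k x)) n"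
begin

sublocale strict_matrix_contraction n "n + k" F1_cols
  by (rule strict_matrix_contraction_if_defect_dim[OF contr defect_dim])

lemma has_dim_range_proj_minus_F1_gram:
  "has_dim ((\<lambda>v m. proj n v m - op_adj (F1op n k x) (F1op n k x v) m) ` l2) n"
proof -
  have "(\<lambda>v m. proj n v m - op_adj (F1op n k x) (F1op n k x v) m) ` l2 = defect ` l2"
    by (rule image_cong[OF refl proj_minus_F1_gram_eq_defect])
  then show ?thesis using has_dim_defect_image by simp
qed

lemma F1_adjoint_inequality:
  "\<exists>lam\<ge>0. \<forall>v\<in>l2. lam * (l2_norm (op_adj (F1op n k x) v))^2 - (l2_norm (F1op n k x v))^2
      \<le> lam * (l2_norm (proj (n + k) v))^2 - (l2_norm (proj n v))^2"
proof -
  obtain \<mu> where \<mu>: "\<mu> > 0" "\<mu> \<le> 1"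
    and bound: "\<And>y. (norm_upto n (mat_adj n (n + k) F1_cols y))^2 \<le> (1 - \<mu>) * (norm_upto (n + k) y)^2"
    using mat_adj_uniformly_strict by blast
  have "1 / \<mu> * (l2_norm (op_adj (F1op n k x) v))^2 - (l2_norm (F1op n k x v))^2
      \<le> 1 / \<mu> * (l2_norm (proj (n + k) v))^2 - (l2_norm (proj n v))^2" if v: "v \<in> l2" for v
  proof -
    have "1 / \<mu> * (l2_norm (op_adj (F1op n k x) v))^2 \<le> 1 / \<mu> * ((1 - \<mu>) * (norm_upto (n + k) v)^2)"
      unfolding F1op_eq_mat_op op_adj_mat_op[OF cols v] l2_norm_supported[OF mat_adj_supported]
      using bound \<mu> by (simp add: divide_right_mono)
    also have "\<dots> = 1 / \<mu> * (norm_upto (n + k) v)^2 - (norm_upto (n + k) v)^2"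
      using \<mu> by (simp add: field_simps)
    finally show ?thesis
      using power_mono[OF norm_upto_mono[of n "n + k" v] norm_upto_nonneg, of 2]
        zero_le_power2[of "l2_norm (F1op n k x v)"]
      unfolding l2_norm_proj by linarith
  qed
  then show ?thesis using \<mu> by (intro exI[of _ "1 / \<mu>"]) auto
qed

lemma Top_pow_contraction:
  assumes v: "v \<in> l2"
  shows "(Top n k x ^^ j) v \<in> l2 \<and> l2_norm ((Top n k x ^^ j) v) \<le> l2_norm v"
proof (induction j)
  case 0
  then show ?case using v by simp
next
  case (Suc j)
  have "\<forall>v\<in>l2. Top n k x v \<in> l2" "\<forall>v\<in>l2. l2_norm (Top n k x v) \<le> l2_norm v"
    using contr unfolding is_contraction_def bounded_op_def by auto
  then show ?case using Suc by (auto intro: order_trans)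
qed

lemma Top_pow_cols_contraction:
  assumes z: "supported_on n z"
  shows "norm_upto (n + k * r) (mat_op n (Top_pow_cols r) z) \<le> norm_upto n z"
proof -
  have "norm_upto (n + k * r) (mat_op n (Top_pow_cols r) z) = l2_norm (mat_op n (Top_pow_cols r) z)"
    by (rule l2_norm_supported[OF mat_op_supported[OF cols_supported_Top_pow_cols], symmetric])
  also have "\<dots> = l2_norm ((Top n k x ^^ r) z)"
    using Top_pow_proj_eq_mat_op[of r z] proj_supported[OF z] by simp
  also have "\<dots> \<le> l2_norm z"
    using Top_pow_contraction[OF supported_in_l2[OF z]] by (rule conjunct2)
  also have "\<dots> = norm_upto n z"
    by (rule l2_norm_supported[OF z])
  finally show ?thesis .
qed

lemma Top_pow_cols_strict:
  assumes r: "1 \<le> r" and z: "supported_on n z" and z0: "z \<noteq> (\<lambda>m. 0)"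
  shows "norm_upto (n + k * r) (mat_op n (Top_pow_cols r) z) < norm_upto n z"
proof -
  have "(Top n k x ^^ r) z = (Top n k x ^^ (r - 1)) (Top n k x z)"
    using r by (metis Suc_diff_1 funpow_Suc_right less_eq_Suc_le o_apply One_nat_def)
  then have eq: "mat_op n (Top_pow_cols r) z = (Top n k x ^^ (r - 1)) (mat_op n F1_cols z)"
    unfolding Top_pow_proj_eq_mat_op[symmetric] proj_supported[OF z] Top_supported_eq_F1[OF z] .
  have "norm_upto (n + k * r) (mat_op n (Top_pow_cols r) z) = l2_norm (mat_op n (Top_pow_cols r) z)"
    by (rule l2_norm_supported[OF mat_op_supported[OF cols_supported_Top_pow_cols], symmetric])
  also have "\<dots> \<le> l2_norm (mat_op n F1_cols z)"
    unfolding eq using Top_pow_contraction[OF supported_in_l2[OF mat_op_supported[OF cols]]]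
    by (rule conjunct2)
  also have "\<dots> = norm_upto (n + k) (mat_op n F1_cols z)"
    by (rule l2_norm_supported[OF mat_op_supported[OF cols]])
  also have "\<dots> < norm_upto n z"
    by (rule strict[OF z z0])
  finally show ?thesis .
qed

lemma op_adj_Frop:
  assumes "1 \<le> r" "v \<in> l2"
  shows "op_adj (Frop n k x r) v = mat_adj n (n + k * r) (Top_pow_cols r) v"
  unfolding Frop_eq_mat_op[OF assms(1)] by (rule op_adj_mat_op[OF cols_supported_Top_pow_cols assms(2)])

lemma norm_Frop_le:
  assumes "1 \<le> r"
  shows "l2_norm (Frop n k x r v) \<le> l2_norm (proj n v)"
  unfolding Frop_eq_Top_pow_proj[OF assms]
  using Top_pow_contraction[OF supported_in_l2[OF supported_on_proj]] by (rule conjunct2)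

lemma norm_op_adj_Frop_le:
  assumes "1 \<le> r" "v \<in> l2"
  shows "l2_norm (op_adj (Frop n k x r) v) \<le> l2_norm (proj (n + k * r) v)"
  unfolding op_adj_Frop[OF assms] l2_norm_supported[OF mat_adj_supported] l2_norm_proj
  by (rule mat_adj_norm_le[OF cols_supported_Top_pow_cols Top_pow_cols_contraction])

lemma Frop_norms_eq_imp_zero:
  assumes k: "1 \<le> k" and v: "v \<in> l2"
    and eq: "\<forall>r\<ge>1. l2_norm (Frop n k x r v) = l2_norm (proj n v)
      \<and> l2_norm (op_adj (Frop n k x r) v) = l2_norm (proj (n + k * r) v)"
  shows "v = (\<lambda>m. 0)"
proof
  fix m
  show "v m = 0"
  proof (cases "m = 0")
    case True
    then show ?thesis using l2_at_0[OF v] by simp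
  next
    case False
    then have m: "1 \<le> m" by simp
    then have "l2_norm (op_adj (Frop n k x m) v) = l2_norm (proj (n + k * m) v)"
      using eq by blast
    then have "norm_upto n (mat_adj n (n + k * m) (Top_pow_cols m) v) = norm_upto (n + k * m) v"
      unfolding op_adj_Frop[OF m v] l2_norm_supported[OF mat_adj_supported] l2_norm_proj .
    moreover have "m \<le> n + k * m" using k by (simp add: trans_le_add2)
    ultimately show ?thesis
      using mat_adj_norm_eq_imp_zero[OF cols_supported_Top_pow_cols Top_pow_cols_strict[OF m]] m
      by blast
  qed
qed

end

theorem proposition3p1:
  fixes n k :: nat and x :: "nat \<Rightarrow> nat \<Rightarrow> complex"
  defines "T \<equiv> Top n k x"
      and "F1 \<equiv> F1op n k x"
      and "Fr \<equiv> Frop n k x"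
  assumes k: "1 \<le> k"
    and contr: "is_contraction T"
    and cnu: "cnu T"
    and finT: "has_dim (defect_space T) n"
    and finTs: "\<exists>d. has_dim (defect_space (op_adj T)) d"
    and incl: "defect_space T \<subseteq> defect_space (op_adj T)"
    and dimdiff: "has_dim (orth_diff (defect_space (op_adj T)) (defect_space T)) k"
  shows "(has_dim ((\<lambda>v m. proj n v m - op_adj F1 (F1 v) m) ` l2) n)
    \<and> (\<forall>v\<in>l2. F1 (\<lambda>m. v m - proj n v m) = (\<lambda>m. 0)
                \<and> (\<lambda>m. F1 v m - proj (n + k) (F1 v) m) = (\<lambda>m. 0))
    \<and> (\<exists>lam\<ge>0. \<forall>v\<in>l2. lam * (l2_norm (op_adj F1 v))^2 - (l2_norm (F1 v))^2
                      \<le> lam * (l2_norm (proj (n + k) v))^2 - (l2_norm (proj n v))^2)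
    \<and> (\<forall>r\<ge>1. \<forall>v\<in>l2. l2_norm (Fr r v) \<le> l2_norm (proj n v)
                   \<and> l2_norm (op_adj (Fr r) v) \<le> l2_norm (proj (n + k * r) v))
    \<and> (\<forall>v\<in>l2. (\<forall>r\<ge>1. l2_norm (Fr r v) = l2_norm (proj n v)
                   \<and> l2_norm (op_adj (Fr r) v) = l2_norm (proj (n + k * r) v))
              \<longrightarrow> v = (\<lambda>m. 0))"
proof -
  interpret contractive_perturbed_shift n k x
    by unfold_locales (use contr finT in \<open>simp_all add: T_def\<close>)
  show ?thesis
    unfolding F1_def Fr_def
    using has_dim_range_proj_minus_F1_gram F1op_proj_compl F1op_range_supported
      F1_adjoint_inequality norm_Frop_le norm_op_adj_Frop_le Frop_norms_eq_imp_zero[OF k]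
    by auto
qed

end
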